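(* Let $\ell$ be a prime and let $G=C$ be a Cartan subgroup of $\mathrm{GL}_2(\mathbb{Z}_\ell)$. If $C$ is split, then $$\mu_{a,b}=\begin{cases}\dfrac{(\ell-2)^2}{(\ell-1)^2} & a=0,\ b=0,\\[2mm] \dfrac{2(\ell-2)}{\ell-1}\,\ell^{-b} & a=0,\ b>0,\\[2mm] \ell^{-2a} & a>0,\ b=0,\\ 2\,\ell^{-2a-b} & a>0,\ b>0.\end{cases}$$ If $C$ is nonsplit, then $$\mu_{a,b}=\begin{cases}\dfrac{\ell^2-2}{\ell^2-1} & a=0,\ b=0,\\[2mm] \ell^{-2a} & a>0,\ b=0,\\ 0 & b>0.\end{cases}$$
   Context: Let $\ell$ be a prime. A quadratic ring over $\mathbb{Z}_\ell$ is a subring $R$ (containing $1$) of a reduced $\mathbb{Q}_\ell$-algebra $F$ of degree $2$ (so $F$ is a quadratic field extension of $\mathbb{Q}_\ell$ or $F=\mathbb{Q}_\ell^2$) such that $R$ is a finitely generated $\mathbb{Z}_\ell$-module and $\mathbb{Q}_\ell R=F$; $\mathcal{O}_F$ denotes the maximal order of $F$ ($\mathcal{O}_F=\mathbb{Z}_\ell^2$ if $F=\mathbb{Q}_\ell^2$). The Cartan subgroup of $\mathrm{GL}_2(\mathbb{Z}_\ell)$ associated with $R$ is the group $R^\times$, embedded in $\mathrm{GL}_2(\mathbb{Z}_\ell)$ via its action by left multiplication on $R$ written in a $\mathbb{Z}_\ell$-basis of $R$ (well defined up to conjugation). It is maximal if $\ell\nmid[\mathcal{O}_F:R]$; split if it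 is maximal and $F\cong\mathbb{Q}_\ell^2$; nonsplit if it is maximal and $F$ is the unramified quadratic field extension of $\mathbb{Q}_\ell$; ramified otherwise. (A split Cartan subgroup is conjugate to the group of invertible diagonal matrices.) Identify each $M\in\mathrm{GL}_2(\mathbb{Z}_\ell)$ with an automorphism of $\varinjlim_n(\mathbb{Z}/\ell^n\mathbb{Z})^2$. For a subgroup $G\subseteq\mathrm{GL}_2(\mathbb{Z}_\ell)$ and integers $a,b\geq0$ let $\mathcal{M}_{a,b}=\{M\in G:\ \ker(M-I)\cong\mathbb{Z}/\ell^a\mathbb{Z}\times\mathbb{Z}/\ell^{a+b}\mathbb{Z}\}$, where the kernel is taken on $\varinjlim_n(\mathbb{Z}/\ell^n\mathbb{Z})^2$, and let $\mu_{a,b}$ be the measure of $\mathcal{M}_{a,b}$ with respect to the Haar measure of $G$ normalized so that $G$ has measure $1$. *)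

theory Defs
  imports Complex_Main "HOL-Computational_Algebra.Primes" "HOL-Algebra.Elementary_Groups"
begin

type_synonym zl = "nat \<Rightarrow> int"

text \<open>An element of Z_l is a compatible family (x n mod l^n)_n with 0 <= x n < l^n.\<close>
definition Zl :: "nat \<Rightarrow> zl set" where
  "Zl l = {x. \<forall>n. 0 \<le> x n \<and> x n < int l ^ n \<and> x (Suc n) mod (int l ^ n) = x n}"

definition zadd :: "nat \<Rightarrow> zl \<Rightarrow> zl \<Rightarrow> zl" where
  "zadd l x y = (\<lambda>n. (x n + y n) mod (int l ^ n))"

definition zsub :: "nat \<Rightarrow> zl \<Rightarrow> zl \<Rightarrow> zl" where
  "zsub l x y = (\<lambda>n. (x n - y n) mod (int l ^ n))"

definition zmul :: "nat \<Rightarrow> zl \<Rightarrow> zl \<Rightarrow> zl" where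
  "zmul l x y = (\<lambda>n. (x n * y n) mod (int l ^ n))"

definition zneg :: "nat \<Rightarrow> zl \<Rightarrow> zl" where
  "zneg l x = (\<lambda>n. (- x n) mod (int l ^ n))"

definition zzero :: zl where
  "zzero = (\<lambda>n. 0)"

definition zone :: "nat \<Rightarrow> zl" where
  "zone l = (\<lambda>n. 1 mod (int l ^ n))"

definition zunit :: "nat \<Rightarrow> zl \<Rightarrow> bool" where
  "zunit l x \<longleftrightarrow> x \<in> Zl l \<and> (\<exists>y \<in> Zl l. zmul l x y = zone l)"

text \<open>(a,b,c,d) stands for the matrix [[a,b],[c,d]].\<close>
type_synonym zmat = "zl \<times> zl \<times> zl \<times> zl"

definition mat_in :: "nat \<Rightarrow> zmat \<Rightarrow> bool" where
  "mat_in l M = (case M of (a,b,c,d) \<Rightarrow> a \<in> Zl l \<and> b \<in> Zl l \<and> c \<in> Zl l \<and> d \<in> Zl l)"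

definition mmul :: "nat \<Rightarrow> zmat \<Rightarrow> zmat \<Rightarrow> zmat" where
  "mmul l M N = (case M of (a,b,c,d) \<Rightarrow> case N of (e,f,g,h) \<Rightarrow>
     (zadd l (zmul l a e) (zmul l b g), zadd l (zmul l a f) (zmul l b h),
      zadd l (zmul l c e) (zmul l d g), zadd l (zmul l c f) (zmul l d h)))"

definition mdet :: "nat \<Rightarrow> zmat \<Rightarrow> zl" where
  "mdet l M = (case M of (a,b,c,d) \<Rightarrow> zsub l (zmul l a d) (zmul l b c))"

definition GL2 :: "nat \<Rightarrow> zmat set" where
  "GL2 l = {M. mat_in l M \<and> zunit l (mdet l M)}"

text \<open>The set P C P^-1 (for P in GL_2(Z_l)), written as N P = P M.\<close>
definition conj_set :: "nat \<Rightarrow> zmat \<Rightarrow> zmat set \<Rightarrow> zmat set" where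
  "conj_set l P C = {N. mat_in l N \<and> (\<exists>M\<in>C. mmul l N P = mmul l P M)}"

text \<open>Split Cartan: R = Z_l x Z_l, i.e. invertible diagonal matrices, up to conjugation.\<close>
definition split_std :: "nat \<Rightarrow> zmat set" where
  "split_std l = {(x, zzero, zzero, y) | x y. zunit l x \<and> zunit l y}"

text \<open>Nonsplit Cartan: R = Z_l[alpha] with alpha^2 = t alpha - n, X^2 - tX + n irreducible mod l
  (this R is the ring of integers of the unramified quadratic extension).  Multiplication by
  x + y alpha in the basis (1, alpha) is the matrix [[x, -n y],[y, x + t y]].\<close>
definition nonsplit_std :: "nat \<Rightarrow> zl \<Rightarrow> zl \<Rightarrow> zmat set" where
  "nonsplit_std l t n = {(x, zneg l (zmul l n y), y, zadd l x (zmul l t y)) | x y.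
      x \<in> Zl l \<and> y \<in> Zl l} \<inter> GL2 l"

definition split_cartan :: "nat \<Rightarrow> zmat set \<Rightarrow> bool" where
  "split_cartan l G \<longleftrightarrow> (\<exists>P\<in>GL2 l. G = conj_set l P (split_std l))"

definition nonsplit_cartan :: "nat \<Rightarrow> zmat set \<Rightarrow> bool" where
  "nonsplit_cartan l G \<longleftrightarrow> (\<exists>P\<in>GL2 l. \<exists>t\<in>Zl l. \<exists>n\<in>Zl l.
      (\<forall>z::int. (z^2 - t 1 * z + n 1) mod int l \<noteq> 0) \<and>
      G = conj_set l P (nonsplit_std l t n))"

text \<open>Q_l/Z_l is modelled as Z[1/l]/Z: rationals in [0,1) with l-power denominator.\<close>
definition QZ :: "nat \<Rightarrow> rat set" where
  "QZ l = {q. 0 \<le> q \<and> q < 1 \<and> (\<exists>k. q * of_nat l ^ k \<in> \<int>)}"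

definition lvl :: "nat \<Rightarrow> rat \<Rightarrow> nat" where
  "lvl l q = (LEAST k. q * of_nat l ^ k \<in> \<int>)"

definition act :: "nat \<Rightarrow> zl \<Rightarrow> rat \<Rightarrow> rat" where
  "act l x q = frac (of_int (x (lvl l q)) * q)"

definition qadd :: "rat \<Rightarrow> rat \<Rightarrow> rat" where
  "qadd u v = frac (u + v)"

definition mact :: "nat \<Rightarrow> zmat \<Rightarrow> rat \<times> rat \<Rightarrow> rat \<times> rat" where
  "mact l M p = (case M of (a,b,c,d) \<Rightarrow> case p of (u,v) \<Rightarrow>
     (qadd (act l a u) (act l b v), qadd (act l c u) (act l d v)))"

definition ker_group :: "nat \<Rightarrow> zmat \<Rightarrow> (rat \<times> rat) monoid" where
  "ker_group l M = \<lparr>carrier = {p \<in> QZ l \<times> QZ l. mact l M p = p},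
     monoid.mult = (\<lambda>p q. (qadd (fst p) (fst q), qadd (snd p) (snd q))),
     one = (0, 0)\<rparr>"

definition Mab :: "nat \<Rightarrow> zmat set \<Rightarrow> nat \<Rightarrow> nat \<Rightarrow> zmat set" where
  "Mab l G a b = {M \<in> G. ker_group l M \<cong>
      DirProd (integer_mod_group (l ^ a)) (integer_mod_group (l ^ (a + b)))}"

definition red :: "nat \<Rightarrow> nat \<Rightarrow> zmat \<Rightarrow> int \<times> int \<times> int \<times> int" where
  "red l n M = (case M of (a,b,c,d) \<Rightarrow> (a n, b n, c n, d n))"

text \<open>For a closed subset S of a closed subgroup G of GL_2(Z_l), the normalized Haar measure
  of S is the limit of |S mod l^n| / |G mod l^n|.\<close>
definition haar :: "nat \<Rightarrow> zmat set \<Rightarrow> zmat set \<Rightarrow> real" where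
  "haar l G S = lim (\<lambda>n. real (card (red l n ` S)) / real (card (red l n ` G)))"

definition mu :: "nat \<Rightarrow> zmat set \<Rightarrow> nat \<Rightarrow> nat \<Rightarrow> real" where
  "mu l G a b = haar l G (Mab l G a b)"

end

(* Conjugation by P in GL_2(Z_l) transports ker(M - I) isomorphically and is a bijection modulo
   every l^n, so mu may be computed on the standard Cartan subgroups.  For M = diag(x, y) the kernel
   on (Q_l/Z_l)^2 is Z/l^v(x - 1) x Z/l^v(y - 1).  For M the multiplication by x + y alpha in the
   unramified quadratic order it is (Z/l^i)^2 with i = v(x + y alpha - 1): after dividing by l^i the
   matrix of M - I has the norm of an element not divisible by l as determinant, which is a unit
   because the norm form is anisotropic modulo l.  Since Z/l^i x Z/l^j is determined by its order and
   exponent, mu_{a,b} is the proportion of residues modulo l^n (any n > a + b) with prescribed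
   valuations of x - 1 and y - 1, resp. of x + y alpha - 1, and these proportions are computed by
   elementary counting. *)
theory Submission
  imports Defs "HOL-Number_Theory.Cong"
begin

lemma Zl_bounds: "x \<in> Zl l \<Longrightarrow> x n \<in> {0..<int l ^ n}"
  by (simp add: Zl_def)

lemma Zl_mod_power:
  assumes "x \<in> Zl l" "k \<le> j" "l > 0"
  shows "x j mod int l ^ k = x k"
  using assms(2)
proof (induction j)
  case 0
  then show ?case using Zl_bounds[OF assms(1), of 0] by simp
next
  case (Suc j)
  show ?case
  proof (cases "k = Suc j")
    case True
    then show ?thesis using Zl_bounds[OF assms(1), of k] by simp
  next
    case False
    then have "k \<le> j" using Suc by simp
    then have "x (Suc j) mod int l ^ k = (x (Suc j) mod int l ^ j) mod int l ^ k"
      by (simp add: mod_mod_cancel le_imp_power_dvd)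
    also have "\<dots> = x j mod int l ^ k" using assms(1) by (simp add: Zl_def)
    finally show ?thesis using Suc.IH \<open>k \<le> j\<close> by simp
  qed
qed

lemma Zl_of_compatible:
  assumes "l > 0" "\<And>n. F (Suc n) mod int l ^ n = F n mod int l ^ n"
  shows "(\<lambda>n. F n mod int l ^ n) \<in> Zl l"
proof -
  have "(F (Suc n) mod int l ^ Suc n) mod int l ^ n = F n mod int l ^ n" for n
    using assms(2)[of n] by (simp add: mod_mod_cancel)
  then show ?thesis using assms(1) by (simp add: Zl_def)
qed

definition zl_of_int :: "nat \<Rightarrow> int \<Rightarrow> zl" where
  "zl_of_int l z = (\<lambda>n. z mod int l ^ n)"

lemma zl_of_int_in_Zl: "l > 0 \<Longrightarrow> zl_of_int l z \<in> Zl l"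
  unfolding zl_of_int_def by (rule Zl_of_compatible) auto

lemma zl_of_int_eval: "X \<in> {0..<int l ^ n} \<Longrightarrow> zl_of_int l X n = X"
  by (simp add: zl_of_int_def)

lemma zadd_in_Zl: "l > 0 \<Longrightarrow> x \<in> Zl l \<Longrightarrow> y \<in> Zl l \<Longrightarrow> zadd l x y \<in> Zl l"
  unfolding zadd_def by (rule Zl_of_compatible, simp, rule mod_add_cong) (simp_all add: Zl_mod_power)

lemma zsub_in_Zl: "l > 0 \<Longrightarrow> x \<in> Zl l \<Longrightarrow> y \<in> Zl l \<Longrightarrow> zsub l x y \<in> Zl l"
  unfolding zsub_def by (rule Zl_of_compatible, simp, rule mod_diff_cong) (simp_all add: Zl_mod_power)

lemma zmul_in_Zl: "l > 0 \<Longrightarrow> x \<in> Zl l \<Longrightarrow> y \<in> Zl l \<Longrightarrow> zmul l x y \<in> Zl l"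
  unfolding zmul_def by (rule Zl_of_compatible, simp, rule mod_mult_cong) (simp_all add: Zl_mod_power)

lemma zneg_in_Zl: "l > 0 \<Longrightarrow> x \<in> Zl l \<Longrightarrow> zneg l x \<in> Zl l"
  unfolding zneg_def by (rule Zl_of_compatible, simp, rule mod_minus_cong) (simp_all add: Zl_mod_power)

lemma zzero_in_Zl: "l > 0 \<Longrightarrow> zzero \<in> Zl l"
  by (simp add: Zl_def zzero_def)

lemma zone_in_Zl: "l > 0 \<Longrightarrow> zone l \<in> Zl l"
  unfolding zone_def by (rule Zl_of_compatible) auto

lemma Zl_dvd_iff_dvd_first:
  assumes "x \<in> Zl l" "l > 0" "n \<ge> 1"
  shows "int l dvd x n \<longleftrightarrow> int l dvd x 1"
proof -
  have "x n mod int l = x 1" using Zl_mod_power[OF assms(1,3,2)] by simp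
  then show ?thesis by (metis dvd_eq_mod_eq_0 mod_mod_trivial)
qed

lemma coprime_prime_power_if_not_dvd:
  assumes "prime l" "\<not> int l dvd X"
  shows "coprime X (int l ^ n)"
proof -
  have "coprime (int l) X" using assms by (simp add: prime_imp_coprime)
  then show ?thesis by (simp add: coprime_commute)
qed

lemma inverse_mod_exists:
  assumes "coprime X (m::int)" "m > 0"
  shows "\<exists>z. z \<in> {0..<m} \<and> (X * z) mod m = 1 mod m"
proof -
  obtain z where "[X * z = 1] (mod m)" using cong_solve_coprime_int[OF assms(1)] by blast
  then have "(X * (z mod m)) mod m = 1 mod m" by (simp add: cong_def mod_mult_right_eq)
  then show ?thesis using assms(2) by (intro exI[of _ "z mod m"]) simp
qed

lemma inverse_mod_unique:
  assumes "(X * z) mod m = 1 mod m" "(X * w) mod m = 1 mod (m::int)"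
  shows "z mod m = w mod m"
proof -
  have "z mod m = (z * ((X * w) mod m)) mod m" using assms(2) by (simp add: mod_mult_right_eq)
  also have "\<dots> = ((X * z) * w) mod m" by (simp add: mod_mult_right_eq ac_simps)
  also have "\<dots> = (((X * z) mod m) * w) mod m" by (simp add: mod_mult_left_eq)
  also have "\<dots> = w mod m" using assms(1) by (simp add: mod_mult_left_eq)
  finally show ?thesis .
qed

lemma zunit_iff_not_dvd:
  assumes "prime l"
  shows "zunit l x \<longleftrightarrow> x \<in> Zl l \<and> \<not> int l dvd x 1"
proof
  have "int l > 1" using assms prime_gt_1_nat by auto
  assume "zunit l x"
  then obtain y where x: "x \<in> Zl l" and xy: "zmul l x y = zone l" by (auto simp: zunit_def)
  have "(x 1 * y 1) mod int l = 1"
    using fun_cong[OF xy, of 1] \<open>int l > 1\<close> by (simp add: zmul_def zone_def)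
  then show "x \<in> Zl l \<and> \<not> int l dvd x 1" using x \<open>int l > 1\<close> by auto
next
  have l0: "l > 0" using assms prime_gt_0_nat by auto
  assume unit: "x \<in> Zl l \<and> \<not> int l dvd x 1"
  then have x: "x \<in> Zl l" by simp
  have coprime: "coprime (x n) (int l ^ n)" for n
  proof (cases "n = 0")
    case False
    then have "\<not> int l dvd x n" using unit Zl_dvd_iff_dvd_first[OF x l0, of n] by simp
    then show ?thesis using coprime_prime_power_if_not_dvd assms by blast
  qed simp
  define y where "y = (\<lambda>n. SOME z. z \<in> {0..<int l ^ n} \<and> (x n * z) mod int l ^ n = 1 mod int l ^ n)"
  have y_spec: "y n \<in> {0..<int l ^ n} \<and> (x n * y n) mod int l ^ n = 1 mod int l ^ n" for n
    unfolding y_def by (rule someI_ex, rule inverse_mod_exists[OF coprime]) (use l0 in simp)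
  have y: "y n \<in> {0..<int l ^ n}" "(x n * y n) mod int l ^ n = 1 mod int l ^ n" for n
    using y_spec by blast+
  have "y (Suc n) mod int l ^ n = y n" for n
  proof -
    have "(x n * y (Suc n)) mod int l ^ n = ((x (Suc n) mod int l ^ n) * y (Suc n)) mod int l ^ n"
      using Zl_mod_power[OF x, of n "Suc n"] l0 by simp
    also have "\<dots> = ((x (Suc n) * y (Suc n)) mod int l ^ Suc n) mod int l ^ n"
      by (simp add: mod_mult_left_eq mod_mod_cancel)
    also have "\<dots> = 1 mod int l ^ n" using y(2)[of "Suc n"] by (simp add: mod_mod_cancel)
    finally have "y (Suc n) mod int l ^ n = y n mod int l ^ n" using inverse_mod_unique y(2) by blast
    then show ?thesis using y(1)[of n] by simp
  qed
  then have "y \<in> Zl l" using y(1) by (simp add: Zl_def)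
  moreover have "zmul l x y = zone l" using y(2) by (simp add: zmul_def zone_def fun_eq_iff)
  ultimately show "zunit l x" using x by (auto simp: zunit_def)
qed

lemma zunit_eval_not_dvd:
  assumes "prime l" "zunit l x" "n \<ge> 1"
  shows "\<not> int l dvd x n"
proof -
  have "x \<in> Zl l" "\<not> int l dvd x 1" using assms(1,2) zunit_iff_not_dvd by auto
  then show ?thesis using Zl_dvd_iff_dvd_first assms(1,3) prime_gt_0_nat by blast
qed

lemma zunit_zl_of_int:
  assumes "prime l" "\<not> int l dvd X"
  shows "zunit l (zl_of_int l X)"
proof -
  have "\<not> int l dvd X mod int l" using assms(2) by (simp add: dvd_eq_mod_eq_0)
  then show ?thesis
    using zunit_iff_not_dvd[OF assms(1)] zl_of_int_in_Zl[OF prime_gt_0_nat[OF assms(1)]]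
    by (simp add: zl_of_int_def)
qed

definition qfrac :: "nat \<Rightarrow> nat \<Rightarrow> int \<Rightarrow> rat" where
  "qfrac l j U = of_int U / of_nat l ^ j"

lemma frac_of_int_div:
  assumes "m > 0"
  shows "frac (of_int A / of_int m :: rat) = of_int (A mod m) / of_int m"
proof -
  have "(of_int A :: rat) = of_int m * of_int (A div m) + of_int (A mod m)"
    by (metis mult_div_mod_eq of_int_add of_int_mult)
  then have "of_int A / of_int m - of_int (A mod m) / of_int m = (of_int (A div m) :: rat)"
    using assms by (simp add: field_simps)
  moreover have "(of_int (A mod m) / of_int m :: rat) \<in> {0..<1}" using assms by simp
  ultimately show ?thesis unfolding frac_unique_iff by (metis Ints_of_int atLeastLessThan_iff)
qed

lemma frac_qfrac: "l > 0 \<Longrightarrow> frac (qfrac l j A) = qfrac l j (A mod int l ^ j)"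
  using frac_of_int_div[of "int l ^ j" A] by (simp add: qfrac_def)

lemma qfrac_eq_iff: "l > 0 \<Longrightarrow> qfrac l j A = qfrac l j B \<longleftrightarrow> A = B"
  by (simp add: qfrac_def)

lemma qfrac_lift:
  assumes "i \<le> j" "l > 0"
  shows "qfrac l i m = qfrac l j (m * int l ^ (j - i))"
proof -
  have "(of_nat l ^ j :: rat) = of_nat l ^ i * of_nat l ^ (j - i)"
    using assms by (simp add: power_add[symmetric])
  then show ?thesis using assms by (simp add: qfrac_def field_simps)
qed

lemma qadd_qfrac: "l > 0 \<Longrightarrow> qadd (qfrac l j A) (qfrac l j B) = qfrac l j ((A + B) mod int l ^ j)"
  unfolding qadd_def using frac_qfrac[of l j "A + B"] by (simp add: qfrac_def add_divide_distrib)

lemma qfrac_in_QZ: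
  assumes "l > 0" "A \<in> {0..<int l ^ j}"
  shows "qfrac l j A \<in> QZ l"
proof -
  have "(of_int A :: rat) < of_nat l ^ j"
    using assms by (metis atLeastLessThan_iff of_int_less_iff of_int_of_nat_eq of_nat_power)
  moreover have "qfrac l j A * of_nat l ^ j = of_int A" using assms by (simp add: qfrac_def)
  ultimately show ?thesis using assms unfolding QZ_def
    by (intro CollectI conjI exI[of _ j]) (auto simp: qfrac_def)
qed

lemma act_qfrac:
  assumes x: "x \<in> Zl l" and l0: "l > 0"
  shows "act l x (qfrac l j U) = qfrac l j ((x j * U) mod int l ^ j)"
proof -
  define q where "q = qfrac l j U"
  define k where "k = lvl l q"
  have qj: "q * of_nat l ^ j \<in> \<int>" using l0 by (simp add: q_def qfrac_def)
  have "k \<le> j" unfolding k_def lvl_def by (rule Least_le) (rule qj)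
  have qk: "q * of_nat l ^ k \<in> \<int>" unfolding k_def lvl_def by (rule LeastI) (rule qj)
  have "x j = x k + int l ^ k * (x j div int l ^ k)"
    using Zl_mod_power[OF x \<open>k \<le> j\<close> l0] by (metis add.commute mult_div_mod_eq)
  then have "of_int (x j) * q = of_int (x k) * q + of_int (x j div int l ^ k) * (q * of_nat l ^ k)"
    by (metis (no_types, lifting) distrib_right mult.assoc mult.commute of_int_add of_int_mult
        of_int_of_nat_eq of_nat_power)
  moreover have "of_int (x j div int l ^ k) * (q * of_nat l ^ k) \<in> \<int>" using qk by simp
  ultimately have "frac (of_int (x k) * q) = frac (of_int (x j) * q)"
    by (simp add: frac_add_int_right)
  also have "\<dots> = frac (qfrac l j (x j * U))" by (simp add: q_def qfrac_def)
  also have "\<dots> = qfrac l j ((x j * U) mod int l ^ j)" by (rule frac_qfrac[OF l0])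
  finally show ?thesis by (simp add: act_def k_def q_def)
qed

lemma QZ_eventually_qfrac:
  assumes "u \<in> QZ l" "l > 0"
  shows "\<exists>k. \<forall>j\<ge>k. \<exists>U \<in> {0..<int l ^ j}. u = qfrac l j U"
proof -
  obtain k where k: "u * of_nat l ^ k \<in> \<int>" using assms by (auto simp: QZ_def)
  have "\<exists>U \<in> {0..<int l ^ j}. u = qfrac l j U" if "j \<ge> k" for j
  proof -
    have "u * of_nat l ^ j = (u * of_nat l ^ k) * of_nat l ^ (j - k)"
      using that by (simp add: power_add[symmetric])
    moreover have "(u * of_nat l ^ k) * of_nat l ^ (j - k) \<in> \<int>"
      by (rule Ints_mult[OF k Ints_power[OF Ints_of_nat]])
    ultimately have "u * of_nat l ^ j \<in> \<int>" by metis
    then obtain U where U: "u * of_nat l ^ j = of_int U" by (auto elim: Ints_cases)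
    have pos: "(of_nat l ^ j :: rat) > 0" using assms by simp
    have u: "u = qfrac l j U" using U pos by (simp add: qfrac_def field_simps)
    have "0 \<le> u" "u < 1" using assms by (auto simp: QZ_def)
    then have "0 \<le> (of_int U :: rat)" "(of_int U :: rat) < of_nat l ^ j"
      using U pos by (simp_all add: U[symmetric])
    then have "U \<in> {0..<int l ^ j}"
      by (simp, metis of_int_less_iff of_int_of_nat_eq of_nat_power)
    then show ?thesis using u by blast
  qed
  then show ?thesis by blast
qed

lemma QZ2_eventually_qfrac:
  assumes "p \<in> QZ l \<times> QZ l" "l > 0"
  shows "\<exists>k. \<forall>j\<ge>k. \<exists>U \<in> {0..<int l ^ j}. \<exists>V \<in> {0..<int l ^ j}. p = (qfrac l j U, qfrac l j V)"
proof -
  obtain k1 k2 where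
    "\<forall>j\<ge>k1. \<exists>U \<in> {0..<int l ^ j}. fst p = qfrac l j U"
    "\<forall>j\<ge>k2. \<exists>V \<in> {0..<int l ^ j}. snd p = qfrac l j V"
    using QZ_eventually_qfrac assms by (metis mem_Times_iff)
  then show ?thesis by (intro exI[of _ "max k1 k2"]) (auto simp: prod_eq_iff)
qed

lemma QZ2_common_qfrac:
  assumes "p \<in> QZ l \<times> QZ l" "p' \<in> QZ l \<times> QZ l" "l > 0"
  shows "\<exists>j. \<exists>U \<in> {0..<int l ^ j}. \<exists>V \<in> {0..<int l ^ j}. \<exists>U' \<in> {0..<int l ^ j}. \<exists>V' \<in> {0..<int l ^ j}.
     p = (qfrac l j U, qfrac l j V) \<and> p' = (qfrac l j U', qfrac l j V')"
proof -
  obtain k k' where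
    "\<forall>j\<ge>k. \<exists>U \<in> {0..<int l ^ j}. \<exists>V \<in> {0..<int l ^ j}. p = (qfrac l j U, qfrac l j V)"
    "\<forall>j\<ge>k'. \<exists>U \<in> {0..<int l ^ j}. \<exists>V \<in> {0..<int l ^ j}. p' = (qfrac l j U, qfrac l j V)"
    using QZ2_eventually_qfrac assms by metis
  then show ?thesis by (meson max.cobounded1 max.cobounded2)
qed

type_synonym imat = "int \<times> int \<times> int \<times> int"

definition mat_mult_mod :: "int \<Rightarrow> imat \<Rightarrow> imat \<Rightarrow> imat" where
  "mat_mult_mod m A B = (case A of (a,b,c,d) \<Rightarrow> case B of (e,f,g,h) \<Rightarrow>
     ((a*e+b*g) mod m, (a*f+b*h) mod m, (c*e+d*g) mod m, (c*f+d*h) mod m))"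

definition mat_one_mod :: "int \<Rightarrow> imat" where
  "mat_one_mod m = (1 mod m, 0, 0, 1 mod m)"

definition reduced_mod :: "int \<Rightarrow> imat \<Rightarrow> bool" where
  "reduced_mod m X = (case X of (a,b,c,d) \<Rightarrow> a mod m = a \<and> b mod m = b \<and> c mod m = c \<and> d mod m = d)"

definition zmat_one :: "nat \<Rightarrow> zmat" where
  "zmat_one l = (zone l, zzero, zzero, zone l)"

lemma mod_mult_mod_simps:
  fixes x y z m :: int
  shows "(x * (y mod m) + z) mod m = (x * y + z) mod m"
    and "(z + x * (y mod m)) mod m = (z + x * y) mod m"
    and "((y mod m) * x + z) mod m = (y * x + z) mod m"
    and "(z + (y mod m) * x) mod m = (z + y * x) mod m"
    and "(x * (y mod m) - z) mod m = (x * y - z) mod m"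
    and "(z - x * (y mod m)) mod m = (z - x * y) mod m"
    and "((y mod m) * x - z) mod m = (y * x - z) mod m"
    and "(z - (y mod m) * x) mod m = (z - y * x) mod m"
  by (rule mod_add_cong mod_diff_cong; simp add: mod_mult_right_eq mod_mult_left_eq)+

lemma mat_mult_mod_assoc: "mat_mult_mod m (mat_mult_mod m A B) C = mat_mult_mod m A (mat_mult_mod m B C)"
proof -
  obtain a b c d e f g h p q r s where "A = (a,b,c,d)" "B = (e,f,g,h)" "C = (p,q,r,s)"
    by (metis prod.exhaust)
  then show ?thesis unfolding mat_mult_mod_def
    by (simp add: mod_simps mod_mult_mod_simps) (simp add: algebra_simps)
qed

lemma mat_mult_mod_one_left: "reduced_mod m X \<Longrightarrow> mat_mult_mod m (mat_one_mod m) X = X"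
  by (cases X) (simp add: reduced_mod_def mat_one_mod_def mat_mult_mod_def mod_simps)

lemma mat_mult_mod_one_right: "reduced_mod m X \<Longrightarrow> mat_mult_mod m X (mat_one_mod m) = X"
  by (cases X) (simp add: reduced_mod_def mat_one_mod_def mat_mult_mod_def mod_simps)

lemma reduced_mod_mat_mult_mod: "reduced_mod m (mat_mult_mod m A B)"
  by (cases A; cases B) (simp add: reduced_mod_def mat_mult_mod_def)

lemma reduced_mod_red: "mat_in l M \<Longrightarrow> reduced_mod (int l ^ n) (red l n M)"
  by (cases M) (auto simp: reduced_mod_def red_def mat_in_def Zl_def)

lemma red_mmul: "red l n (mmul l M N) = mat_mult_mod (int l ^ n) (red l n M) (red l n N)"
  by (cases M; cases N) (simp add: red_def mmul_def mat_mult_mod_def zadd_def zmul_def mod_add_eq)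

lemma red_zmat_one: "red l n (zmat_one l) = mat_one_mod (int l ^ n)"
  by (simp add: red_def zmat_one_def zone_def zzero_def mat_one_mod_def)

lemma zmat_eqI_red: "(\<And>n. red l n M = red l n N) \<Longrightarrow> M = N"
  by (cases M; cases N) (auto simp: red_def fun_eq_iff)

lemma mat_in_mmul: "l > 0 \<Longrightarrow> mat_in l M \<Longrightarrow> mat_in l N \<Longrightarrow> mat_in l (mmul l M N)"
  by (cases M; cases N) (simp add: mat_in_def mmul_def zadd_in_Zl zmul_in_Zl)

lemma mat_in_zmat_one: "l > 0 \<Longrightarrow> mat_in l (zmat_one l)"
  by (simp add: mat_in_def zmat_one_def zone_in_Zl zzero_in_Zl)

lemma GL2_inverse:
  assumes "prime l" "P \<in> GL2 l"
  shows "\<exists>Q. mat_in l Q \<and> mmul l P Q = zmat_one l \<and> mmul l Q P = zmat_one l"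
proof -
  have l0: "l > 0" using assms prime_gt_0_nat by auto
  obtain a b c d where P: "P = (a,b,c,d)" by (cases P) auto
  have abcd: "a \<in> Zl l" "b \<in> Zl l" "c \<in> Zl l" "d \<in> Zl l"
    using assms(2) by (auto simp: GL2_def mat_in_def P)
  obtain e where e: "e \<in> Zl l" "zmul l (mdet l P) e = zone l"
    using assms(2) by (auto simp: GL2_def zunit_def)
  define Q where "Q = (zmul l d e, zneg l (zmul l b e), zneg l (zmul l c e), zmul l a e)"
  have "mat_in l Q" using abcd e l0 by (simp add: Q_def mat_in_def zmul_in_Zl zneg_in_Zl)
  have det: "((a n * d n - b n * c n) * e n) mod int l ^ n = 1 mod int l ^ n" for n
    using fun_cong[OF e(2), of n] by (simp add: P mdet_def zmul_def zsub_def zone_def mod_simps)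
  have "red l n (mmul l P Q) = red l n (zmat_one l)" "red l n (mmul l Q P) = red l n (zmat_one l)" for n
    unfolding red_mmul red_zmat_one using det[of n]
    by (simp_all add: P Q_def red_def mat_mult_mod_def mat_one_mod_def zmul_def zneg_def mod_simps
        mod_mult_mod_simps) (simp_all add: algebra_simps)
  then show ?thesis using \<open>mat_in l Q\<close> zmat_eqI_red by blast
qed

lemma mact_qfrac:
  assumes "mat_in l M" "l > 0" "M = (a,b,c,d)"
  shows "mact l M (qfrac l j U, qfrac l j V) =
     (qfrac l j ((a j * U + b j * V) mod int l ^ j), qfrac l j ((c j * U + d j * V) mod int l ^ j))"
  using assms by (simp add: mact_def mat_in_def act_qfrac qadd_qfrac mod_add_eq)

lemma mact_in_QZ:
  assumes "mat_in l M" "l > 0" "p \<in> QZ l \<times> QZ l"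
  shows "mact l M p \<in> QZ l \<times> QZ l"
proof -
  obtain a b c d where M: "M = (a,b,c,d)" by (cases M) auto
  obtain j U V where "p = (qfrac l j U, qfrac l j V)"
    using QZ2_eventually_qfrac[OF assms(3,2)] by blast
  then show ?thesis
    using assms(2) by (simp add: mact_qfrac[OF assms(1,2) M] qfrac_in_QZ)
qed

lemma mact_mmul:
  assumes "mat_in l A" "mat_in l B" "l > 0" "p \<in> QZ l \<times> QZ l"
  shows "mact l (mmul l A B) p = mact l A (mact l B p)"
proof -
  obtain a b c d e f g h where A: "A = (a,b,c,d)" and B: "B = (e,f,g,h)" by (metis prod.exhaust)
  have AB: "mmul l A B = (zadd l (zmul l a e) (zmul l b g), zadd l (zmul l a f) (zmul l b h),
      zadd l (zmul l c e) (zmul l d g), zadd l (zmul l c f) (zmul l d h))"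
    by (simp add: A B mmul_def)
  obtain j U V where p: "p = (qfrac l j U, qfrac l j V)"
    using QZ2_eventually_qfrac[OF assms(4,3)] by blast
  show ?thesis
    unfolding p mact_qfrac[OF mat_in_mmul[OF assms(3,1,2)] assms(3) AB]
      mact_qfrac[OF assms(2,3) B] mact_qfrac[OF assms(1,3) A]
    by (simp add: qfrac_eq_iff[OF assms(3)] zadd_def zmul_def mod_simps mod_mult_mod_simps)
      (simp add: algebra_simps)
qed

lemma mact_zmat_one:
  assumes "l > 0" "p \<in> QZ l \<times> QZ l"
  shows "mact l (zmat_one l) p = p"
proof -
  obtain j U V where "U \<in> {0..<int l ^ j}" "V \<in> {0..<int l ^ j}" "p = (qfrac l j U, qfrac l j V)"
    using QZ2_eventually_qfrac[OF assms(2,1)] by blast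
  then show ?thesis
    using mact_qfrac[OF mat_in_zmat_one[OF assms(1)] assms(1) zmat_one_def] assms(1)
    by (simp add: zone_def zzero_def qfrac_eq_iff mod_simps)
qed

lemma mact_inverse:
  assumes "mat_in l P" "mat_in l Q" "l > 0" "mmul l Q P = zmat_one l" "p \<in> QZ l \<times> QZ l"
  shows "mact l Q (mact l P p) = p"
  using mact_mmul[OF assms(2,1,3,5)] assms(4) mact_zmat_one[OF assms(3,5)] by simp

lemma mact_qadd:
  assumes "mat_in l M" "l > 0" "p \<in> QZ l \<times> QZ l" "p' \<in> QZ l \<times> QZ l"
  shows "mact l M (qadd (fst p) (fst p'), qadd (snd p) (snd p')) =
    (qadd (fst (mact l M p)) (fst (mact l M p')), qadd (snd (mact l M p)) (snd (mact l M p')))"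
proof -
  obtain a b c d where M: "M = (a,b,c,d)" by (cases M) auto
  obtain j U V U' V' where "p = (qfrac l j U, qfrac l j V)" "p' = (qfrac l j U', qfrac l j V')"
    using QZ2_common_qfrac[OF assms(3,4,2)] by blast
  then show ?thesis
    by (simp add: qadd_qfrac[OF assms(2)] mact_qfrac[OF assms(1,2) M] qfrac_eq_iff[OF assms(2)]
        mod_simps mod_mult_mod_simps) (simp add: algebra_simps)
qed

section \<open>Kernels of M - I\<close>

definition QZ_tors :: "nat \<Rightarrow> nat \<Rightarrow> rat set" where
  "QZ_tors l i = qfrac l i ` {0..<int l ^ i}"

definition cyclic_prod :: "nat \<Rightarrow> nat \<Rightarrow> nat \<Rightarrow> (int \<times> int) monoid" where
  "cyclic_prod l i j = integer_mod_group (l ^ i) \<times>\<times> integer_mod_group (l ^ j)"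

lemma qfrac_in_QZ_tors_iff:
  assumes "i \<le> j" "l > 0" "U \<in> {0..<int l ^ j}"
  shows "qfrac l j U \<in> QZ_tors l i \<longleftrightarrow> int l ^ (j - i) dvd U"
proof
  assume "int l ^ (j - i) dvd U"
  then obtain m where U: "U = int l ^ (j - i) * m" by blast
  have pos: "int l ^ (j - i) > 0" using assms(2) by simp
  have "int l ^ j = int l ^ (j - i) * int l ^ i" using assms(1) by (simp add: power_add[symmetric])
  then have "m < int l ^ i" using U assms(3) pos by (metis atLeastLessThan_iff mult_less_cancel_left_pos)
  moreover have "0 \<le> m" using U assms(3) pos by (simp add: zero_le_mult_iff)
  ultimately have "m \<in> {0..<int l ^ i}" by simp
  moreover have "qfrac l j U = qfrac l i m" using qfrac_lift[OF assms(1,2), of m] U by (simp add: ac_simps)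
  ultimately show "qfrac l j U \<in> QZ_tors l i" by (auto simp: QZ_tors_def)
next
  assume "qfrac l j U \<in> QZ_tors l i"
  then obtain m where "qfrac l j U = qfrac l i m" by (auto simp: QZ_tors_def)
  then have "U = m * int l ^ (j - i)" using qfrac_lift[OF assms(1,2), of m] qfrac_eq_iff[OF assms(2)] by simp
  then show "int l ^ (j - i) dvd U" by simp
qed

lemma mact_fixes_qfrac_iff:
  assumes "M = (a,b,c,d)" "mat_in l M" "l > 0" "U \<in> {0..<int l ^ j}" "V \<in> {0..<int l ^ j}"
  shows "mact l M (qfrac l j U, qfrac l j V) = (qfrac l j U, qfrac l j V) \<longleftrightarrow>
    ((a j - 1) * U + b j * V) mod int l ^ j = 0 \<and> (c j * U + (d j - 1) * V) mod int l ^ j = 0"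
proof -
  have fixed_iff: "X mod int l ^ j = W \<longleftrightarrow> (X - W) mod int l ^ j = 0" if "W \<in> {0..<int l ^ j}" for X W
  proof -
    have "X mod int l ^ j = W \<longleftrightarrow> X mod int l ^ j = W mod int l ^ j" using that by simp
    also have "\<dots> \<longleftrightarrow> (X - W) mod int l ^ j = 0" by (simp add: mod_eq_dvd_iff dvd_eq_mod_eq_0)
    finally show ?thesis .
  qed
  have "mact l M (qfrac l j U, qfrac l j V) = (qfrac l j U, qfrac l j V) \<longleftrightarrow>
      (a j * U + b j * V) mod int l ^ j = U \<and> (c j * U + d j * V) mod int l ^ j = V"
    by (simp add: mact_qfrac[OF assms(2,3,1)] qfrac_eq_iff[OF assms(3)])
  also have "\<dots> \<longleftrightarrow> (a j * U + b j * V - U) mod int l ^ j = 0 \<and> (c j * U + d j * V - V) mod int l ^ j = 0"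
    by (simp only: fixed_iff[OF assms(4)] fixed_iff[OF assms(5)])
  also have "\<dots> \<longleftrightarrow> ((a j - 1) * U + b j * V) mod int l ^ j = 0 \<and> (c j * U + (d j - 1) * V) mod int l ^ j = 0"
    by (simp add: algebra_simps)
  finally show ?thesis .
qed

text \<open>Every point of \<open>QZ l \<times> QZ l\<close> is a pair of fractions with denominator \<open>l^j\<close> for all large
  \<open>j\<close>, so the kernel is determined by the fixed-point conditions at the levels \<open>j \<ge> J\<close>.\<close>

lemma ker_group_carrier_eq_QZ_tors:
  assumes M: "M = (a,b,c,d)" "mat_in l M" and l0: "l > 0" and J: "i1 \<le> J" "i2 \<le> J"
    and fixed_iff: "\<And>j U V. j \<ge> J \<Longrightarrow> U \<in> {0..<int l ^ j} \<Longrightarrow> V \<in> {0..<int l ^ j} \<Longrightarrow>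
      ((a j - 1) * U + b j * V) mod int l ^ j = 0 \<and> (c j * U + (d j - 1) * V) mod int l ^ j = 0
      \<longleftrightarrow> int l ^ (j - i1) dvd U \<and> int l ^ (j - i2) dvd V"
  shows "carrier (ker_group l M) = QZ_tors l i1 \<times> QZ_tors l i2"
proof -
  have level: "(qfrac l j U, qfrac l j V) \<in> carrier (ker_group l M) \<longleftrightarrow>
      (qfrac l j U, qfrac l j V) \<in> QZ_tors l i1 \<times> QZ_tors l i2"
    if "j \<ge> J" "U \<in> {0..<int l ^ j}" "V \<in> {0..<int l ^ j}" for j U V
    using that J mact_fixes_qfrac_iff[OF M l0 that(2,3)] fixed_iff[OF that]
      qfrac_in_QZ_tors_iff[of i1 j l U] qfrac_in_QZ_tors_iff[of i2 j l V]
    by (simp add: ker_group_def qfrac_in_QZ l0)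
  show ?thesis
  proof (rule equalityI; rule subsetI)
    fix p assume p: "p \<in> carrier (ker_group l M)"
    then have "p \<in> QZ l \<times> QZ l" by (simp add: ker_group_def)
    then obtain k where "\<forall>j\<ge>k. \<exists>U \<in> {0..<int l ^ j}. \<exists>V \<in> {0..<int l ^ j}. p = (qfrac l j U, qfrac l j V)"
      using QZ2_eventually_qfrac l0 by blast
    then obtain U V where "U \<in> {0..<int l ^ max k J}" "V \<in> {0..<int l ^ max k J}"
      "p = (qfrac l (max k J) U, qfrac l (max k J) V)"
      by (meson max.cobounded1)
    then show "p \<in> QZ_tors l i1 \<times> QZ_tors l i2" using level[of "max k J" U V] p by simp
  next
    fix p assume "p \<in> QZ_tors l i1 \<times> QZ_tors l i2"
    then obtain m1 m2 where m: "m1 \<in> {0..<int l ^ i1}" "m2 \<in> {0..<int l ^ i2}"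
      and p: "p = (qfrac l i1 m1, qfrac l i2 m2)"
      by (auto simp: QZ_tors_def)
    define U V where "U = m1 * int l ^ (J - i1)" and "V = m2 * int l ^ (J - i2)"
    have "int l ^ J = int l ^ i1 * int l ^ (J - i1)" using J by (simp add: power_add[symmetric])
    then have U: "U \<in> {0..<int l ^ J}" using m l0 by (simp add: U_def mult_strict_right_mono)
    have "int l ^ J = int l ^ i2 * int l ^ (J - i2)" using J by (simp add: power_add[symmetric])
    then have V: "V \<in> {0..<int l ^ J}" using m l0 by (simp add: V_def mult_strict_right_mono)
    have "p = (qfrac l J U, qfrac l J V)"
      using p qfrac_lift[OF J(1) l0] qfrac_lift[OF J(2) l0] by (simp add: U_def V_def)
    moreover have "p \<in> QZ_tors l i1 \<times> QZ_tors l i2" using m p by (auto simp: QZ_tors_def)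
    ultimately show "p \<in> carrier (ker_group l M)" using level[OF order_refl U V] by simp
  qed
qed

lemma carrier_cyclic_prod: "l > 0 \<Longrightarrow> carrier (cyclic_prod l i j) = {0..<int l ^ i} \<times> {0..<int l ^ j}"
  by (simp add: cyclic_prod_def carrier_integer_mod_group)

lemma group_cyclic_prod: "group (cyclic_prod l i j)"
  by (simp add: cyclic_prod_def DirProd_group)

lemma card_cyclic_prod: "l > 0 \<Longrightarrow> card (carrier (cyclic_prod l i j)) = l ^ (i + j)"
  by (simp add: carrier_cyclic_prod power_add nat_power_eq)

lemma cyclic_prod_iso_ker_group:
  assumes l0: "l > 0" and C: "carrier (ker_group l M) = QZ_tors l i1 \<times> QZ_tors l i2"
  shows "cyclic_prod l i1 i2 \<cong> ker_group l M"
proof -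
  let ?f = "\<lambda>(m1, m2). (qfrac l i1 m1, qfrac l i2 m2)"
  have "?f \<in> hom (cyclic_prod l i1 i2) (ker_group l M)"
  proof (rule homI)
    fix x assume "x \<in> carrier (cyclic_prod l i1 i2)"
    then show "?f x \<in> carrier (ker_group l M)" using C l0 by (auto simp: carrier_cyclic_prod QZ_tors_def)
  next
    fix x y assume "x \<in> carrier (cyclic_prod l i1 i2)" "y \<in> carrier (cyclic_prod l i1 i2)"
    then show "?f (x \<otimes>\<^bsub>cyclic_prod l i1 i2\<^esub> y) = ?f x \<otimes>\<^bsub>ker_group l M\<^esub> ?f y"
      using l0 by (cases x; cases y) (simp add: cyclic_prod_def ker_group_def qadd_qfrac of_nat_power)
  qed
  moreover have "bij_betw ?f (carrier (cyclic_prod l i1 i2)) (carrier (ker_group l M))"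
    unfolding C bij_betw_def using l0 qfrac_eq_iff[OF l0]
    by (auto simp: carrier_cyclic_prod QZ_tors_def inj_on_def)
  ultimately show ?thesis by (auto simp: is_iso_def iso_def)
qed

definition annihilated_by :: "('a, 'b) monoid_scheme \<Rightarrow> nat \<Rightarrow> bool" where
  "annihilated_by G N \<longleftrightarrow> (\<forall>g \<in> carrier G. g [^]\<^bsub>G\<^esub> N = \<one>\<^bsub>G\<^esub>)"

lemma annihilated_by_iso:
  assumes "G \<cong> H" "group G" "group H" "annihilated_by G N"
  shows "annihilated_by H N"
  unfolding annihilated_by_def
proof
  fix g assume g: "g \<in> carrier H"
  obtain h where h: "h \<in> iso G H" using assms(1) by (auto simp: is_iso_def)
  then obtain x where x: "x \<in> carrier G" "g = h x"
    using g by (auto simp: iso_def bij_betw_def)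
  interpret group_hom G H h
    using assms(2,3) h by (simp add: group_hom_def group_hom_axioms_def iso_def)
  have "g [^]\<^bsub>H\<^esub> N = h (x [^]\<^bsub>G\<^esub> N)" using x hom_nat_pow[OF x(1)] by simp
  also have "\<dots> = \<one>\<^bsub>H\<^esub>" using assms(4) x by (simp add: annihilated_by_def)
  finally show "g [^]\<^bsub>H\<^esub> N = \<one>\<^bsub>H\<^esub>" .
qed

lemma pow_DirProd: "(x, y) [^]\<^bsub>G \<times>\<times> H\<^esub> (n::nat) = (x [^]\<^bsub>G\<^esub> n, y [^]\<^bsub>H\<^esub> n)"
  by (induction n) simp_all

lemma integer_mod_group_annihilated_iff:
  assumes "l > 1"
  shows "(\<forall>m \<in> {0..<int l ^ i}. (int l ^ k * m) mod int l ^ i = 0) \<longleftrightarrow> i \<le> k"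
proof
  assume annihilated: "\<forall>m \<in> {0..<int l ^ i}. (int l ^ k * m) mod int l ^ i = 0"
  show "i \<le> k"
  proof (rule ccontr)
    assume "\<not> i \<le> k"
    then have "int l ^ k < int l ^ i" using assms by (simp add: power_strict_increasing)
    moreover have "1 \<in> {0..<int l ^ i}" using \<open>\<not> i \<le> k\<close> assms by (simp add: one_less_power)
    moreover have "(int l ^ k * 1) mod int l ^ i = 0" using annihilated \<open>1 \<in> {0..<int l ^ i}\<close> by blast
    ultimately show False using assms by simp
  qed
qed (simp add: le_imp_power_dvd)

lemma cyclic_prod_annihilated_by_iff:
  assumes "l > 1"
  shows "annihilated_by (cyclic_prod l i j) (l ^ k) \<longleftrightarrow> i \<le> k \<and> j \<le> k"
proof -
  have "annihilated_by (cyclic_prod l i j) (l ^ k) \<longleftrightarrow>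
      (\<forall>x \<in> {0..<int l ^ i}. \<forall>y \<in> {0..<int l ^ j}.
         (int l ^ k * x) mod int l ^ i = 0 \<and> (int l ^ k * y) mod int l ^ j = 0)"
    using assms by (simp add: annihilated_by_def cyclic_prod_def pow_DirProd carrier_integer_mod_group
        of_nat_power)
  also have "\<dots> \<longleftrightarrow> (\<forall>x \<in> {0..<int l ^ i}. (int l ^ k * x) mod int l ^ i = 0) \<and>
      (\<forall>y \<in> {0..<int l ^ j}. (int l ^ k * y) mod int l ^ j = 0)"
    using assms by fastforce
  finally show ?thesis using integer_mod_group_annihilated_iff[OF assms] by simp
qed

text \<open>Order and exponent determine the isomorphism type of \<open>\<int>/l^i \<times> \<int>/l^j\<close>.\<close>

lemma cyclic_prod_iso_iff:
  assumes "l > 1"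
  shows "cyclic_prod l i j \<cong> cyclic_prod l a (a + b) \<longleftrightarrow> (i = a \<and> j = a + b) \<or> (i = a + b \<and> j = a)"
proof
  assume iso: "cyclic_prod l i j \<cong> cyclic_prod l a (a + b)"
  have iso': "cyclic_prod l a (a + b) \<cong> cyclic_prod l i j" using group.iso_sym[OF group_cyclic_prod iso] .
  have "l ^ (i + j) = l ^ (a + (a + b))" using iso_same_card[OF iso] card_cyclic_prod assms by simp
  then have "i + j = a + (a + b)" using assms power_inject_exp by blast
  moreover have "i \<le> a + b \<and> j \<le> a + b"
    using annihilated_by_iso[OF iso' group_cyclic_prod group_cyclic_prod, of "l ^ (a + b)"]
      cyclic_prod_annihilated_by_iff[OF assms] by simp
  moreover have "a + b \<le> max i j"
    using annihilated_by_iso[OF iso group_cyclic_prod group_cyclic_prod, of "l ^ max i j"]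
      cyclic_prod_annihilated_by_iff[OF assms] by simp
  ultimately show "(i = a \<and> j = a + b) \<or> (i = a + b \<and> j = a)" by linarith
next
  assume "(i = a \<and> j = a + b) \<or> (i = a + b \<and> j = a)"
  then show "cyclic_prod l i j \<cong> cyclic_prod l a (a + b)"
    unfolding cyclic_prod_def by (auto simp: iso_refl DirProd_commute_iso)
qed

lemma ker_group_iso_cyclic_prod_iff:
  assumes "l > 1" "carrier (ker_group l M) = QZ_tors l i1 \<times> QZ_tors l i2"
  shows "ker_group l M \<cong> cyclic_prod l a (a + b) \<longleftrightarrow> (i1 = a \<and> i2 = a + b) \<or> (i1 = a + b \<and> i2 = a)"
proof -
  have iso: "cyclic_prod l i1 i2 \<cong> ker_group l M" using cyclic_prod_iso_ker_group assms by simp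
  then have "ker_group l M \<cong> cyclic_prod l i1 i2" using group.iso_sym[OF group_cyclic_prod] by blast
  then have "ker_group l M \<cong> cyclic_prod l a (a + b) \<longleftrightarrow> cyclic_prod l i1 i2 \<cong> cyclic_prod l a (a + b)"
    using iso iso_trans by metis
  then show ?thesis using cyclic_prod_iso_iff[OF assms(1)] by simp
qed

lemma infinite_QZ: "l > 1 \<Longrightarrow> infinite (QZ l)"
proof
  assume l: "l > 1" and "finite (QZ l)"
  have "qfrac l (Suc k) 1 \<in> QZ l" for k
    using qfrac_in_QZ[of l 1 "Suc k"] one_less_power[of "int l" "Suc k"] l by simp
  then have "range (\<lambda>k. qfrac l (Suc k) 1) \<subseteq> QZ l" by (simp add: image_subset_iff)
  moreover have "inj (\<lambda>k. qfrac l (Suc k) 1)"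
  proof (rule injI)
    fix k k' assume "qfrac l (Suc k) 1 = qfrac l (Suc k') 1"
    then have "l ^ Suc k = l ^ Suc k'" by (simp add: qfrac_def) (metis of_nat_eq_iff of_nat_power)
    then show "k = k'" using l power_inject_exp by blast
  qed
  ultimately show False using \<open>finite (QZ l)\<close> by (meson finite_imageD finite_subset infinite_UNIV_nat)
qed

text \<open>The kernel then contains a copy of the infinite group \<open>QZ l\<close>.\<close>

lemma ker_group_not_iso_cyclic_prod_if_fixes_axis:
  assumes M: "M = (a,b,c,d)" "mat_in l M" and l: "l > 1"
    and axis: "(\<forall>j. (a j - 1) mod int l ^ j = 0 \<and> c j = 0) \<or> (\<forall>j. b j = 0 \<and> (d j - 1) mod int l ^ j = 0)"
  shows "\<not> ker_group l M \<cong> cyclic_prod l i k"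
proof -
  have l0: "l > 0" using l by simp
  have fixed: "(qfrac l j U, qfrac l j V) \<in> carrier (ker_group l M)"
    if "U \<in> {0..<int l ^ j}" "V \<in> {0..<int l ^ j}"
      "((a j - 1) * U + b j * V) mod int l ^ j = 0" "(c j * U + (d j - 1) * V) mod int l ^ j = 0" for j U V
    using that mact_fixes_qfrac_iff[OF M l0 that(1,2)] by (simp add: ker_group_def qfrac_in_QZ l0)
  have "infinite (carrier (ker_group l M))"
    using axis
  proof
    assume first: "\<forall>j. (a j - 1) mod int l ^ j = 0 \<and> c j = 0"
    have "(\<lambda>u. (u, 0::rat)) ` QZ l \<subseteq> carrier (ker_group l M)"
    proof (rule image_subsetI)
      fix u assume "u \<in> QZ l"
      then obtain j where "\<forall>j'\<ge>j. \<exists>U \<in> {0..<int l ^ j'}. u = qfrac l j' U"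
        using QZ_eventually_qfrac l0 by blast
      then obtain U where U: "U \<in> {0..<int l ^ j}" "u = qfrac l j U" by blast
      then show "(u, 0) \<in> carrier (ker_group l M)"
        using fixed[OF U(1), of 0] first l0 by (simp add: qfrac_def mod_eq_0_iff_dvd)
    qed
    moreover have "infinite ((\<lambda>u. (u, 0::rat)) ` QZ l)"
      using infinite_QZ[OF l] by (simp add: finite_image_iff inj_on_def)
    ultimately show ?thesis using finite_subset by blast
  next
    assume second: "\<forall>j. b j = 0 \<and> (d j - 1) mod int l ^ j = 0"
    have "(\<lambda>v. (0::rat, v)) ` QZ l \<subseteq> carrier (ker_group l M)"
    proof (rule image_subsetI)
      fix v assume "v \<in> QZ l"
      then obtain j where "\<forall>j'\<ge>j. \<exists>V \<in> {0..<int l ^ j'}. v = qfrac l j' V"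
        using QZ_eventually_qfrac l0 by blast
      then obtain V where V: "V \<in> {0..<int l ^ j}" "v = qfrac l j V" by blast
      then show "(0, v) \<in> carrier (ker_group l M)"
        using fixed[of 0 j V] V(1) second l0 by (simp add: qfrac_def mod_eq_0_iff_dvd)
    qed
    moreover have "infinite ((\<lambda>v. (0::rat, v)) ` QZ l)"
      using infinite_QZ[OF l] by (simp add: finite_image_iff inj_on_def)
    ultimately show ?thesis using finite_subset by blast
  qed
  moreover have "finite (carrier (cyclic_prod l i k))" using l0 by (simp add: carrier_cyclic_prod)
  ultimately show ?thesis using iso_finite[of "ker_group l M" "cyclic_prod l i k"] by blast
qed

section \<open>Invariance under conjugation\<close>

lemma red_conj:
  assumes "mat_in l N" "mmul l P Q = zmat_one l" "mmul l N P = mmul l P M"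
  shows "red l n N = mat_mult_mod (int l ^ n) (mat_mult_mod (int l ^ n) (red l n P) (red l n M)) (red l n Q)"
proof -
  let ?m = "int l ^ n" and ?r = "red l n"
  have "?r N = mat_mult_mod ?m (?r N) (mat_one_mod ?m)"
    using mat_mult_mod_one_right[OF reduced_mod_red[OF assms(1)]] by simp
  also have "\<dots> = mat_mult_mod ?m (mat_mult_mod ?m (?r N) (?r P)) (?r Q)"
    using arg_cong[OF assms(2), of ?r] by (simp add: red_mmul red_zmat_one mat_mult_mod_assoc)
  finally show ?thesis using arg_cong[OF assms(3), of ?r] by (simp add: red_mmul)
qed

lemma mmul_conj_sym:
  assumes "mat_in l N" "mat_in l M"
    and "mmul l P Q = zmat_one l" "mmul l Q P = zmat_one l" "mmul l N P = mmul l P M"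
  shows "mmul l M Q = mmul l Q N"
proof (rule zmat_eqI_red)
  fix n
  let ?m = "int l ^ n" and ?r = "red l n"
  have QP: "mat_mult_mod ?m (?r Q) (?r P) = mat_one_mod ?m"
    using arg_cong[OF assms(4), of ?r] by (simp add: red_mmul red_zmat_one)
  have "?r (mmul l Q N) = mat_mult_mod ?m (?r Q) (mat_mult_mod ?m (mat_mult_mod ?m (?r P) (?r M)) (?r Q))"
    using red_conj[OF assms(1,3,5)] by (simp add: red_mmul)
  also have "\<dots> = mat_mult_mod ?m (mat_mult_mod ?m (mat_mult_mod ?m (?r Q) (?r P)) (?r M)) (?r Q)"
    by (simp add: mat_mult_mod_assoc)
  also have "\<dots> = ?r (mmul l M Q)"
    using mat_mult_mod_one_left[OF reduced_mod_red[OF assms(2)]] by (simp add: QP red_mmul)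
  finally show "?r (mmul l M Q) = ?r (mmul l Q N)" by simp
qed

lemma mact_iso_ker_group:
  assumes l0: "l > 0" and mat_in: "mat_in l P" "mat_in l Q" "mat_in l M" "mat_in l N"
    and QP: "mmul l Q P = zmat_one l" and PQ: "mmul l P Q = zmat_one l" and NP: "mmul l N P = mmul l P M"
  shows "mact l P \<in> iso (ker_group l M) (ker_group l N)"
proof -
  have QP_inv: "mact l Q (mact l P p) = p" and PQ_inv: "mact l P (mact l Q p) = p"
    if "p \<in> QZ l \<times> QZ l" for p
    using mact_inverse[OF mat_in(1,2) l0 QP that] mact_inverse[OF mat_in(2,1) l0 PQ that] by simp_all
  have PM: "mact l P (mact l M p) = mact l N (mact l P p)" if "p \<in> QZ l \<times> QZ l" for p
    using mact_mmul[OF mat_in(1,3) l0 that] mact_mmul[OF mat_in(4,1) l0 that] NP by simp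
  have into: "mact l P p \<in> carrier (ker_group l N)" if p: "p \<in> carrier (ker_group l M)" for p
  proof -
    have pz: "p \<in> QZ l \<times> QZ l" and fixed: "mact l M p = p" using p by (auto simp: ker_group_def)
    then have "mact l N (mact l P p) = mact l P p" using PM by metis
    then show ?thesis using mact_in_QZ[OF mat_in(1) l0 pz] by (simp add: ker_group_def)
  qed
  have onto: "mact l Q q \<in> carrier (ker_group l M)" if q: "q \<in> carrier (ker_group l N)" for q
  proof -
    have qz: "q \<in> QZ l \<times> QZ l" and fixed: "mact l N q = q" using q by (auto simp: ker_group_def)
    define p where "p = mact l Q q"
    have pz: "p \<in> QZ l \<times> QZ l" using mact_in_QZ[OF mat_in(2) l0 qz] by (simp add: p_def)
    have "mact l M p = mact l Q (mact l P (mact l M p))" using QP_inv mact_in_QZ[OF mat_in(3) l0 pz] by simp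
    also have "\<dots> = p" using PM[OF pz] PQ_inv[OF qz] fixed by (simp add: p_def)
    finally show ?thesis using pz by (simp add: ker_group_def p_def)
  qed
  have "mact l P \<in> hom (ker_group l M) (ker_group l N)"
    using into mact_qadd[OF mat_in(1) l0] by (intro homI) (auto simp: ker_group_def)
  moreover have "bij_betw (mact l P) (carrier (ker_group l M)) (carrier (ker_group l N))"
  proof (rule bij_betw_byWitness[where f' = "mact l Q"])
    show "\<forall>p \<in> carrier (ker_group l M). mact l Q (mact l P p) = p" using QP_inv by (simp add: ker_group_def)
    show "\<forall>q \<in> carrier (ker_group l N). mact l P (mact l Q q) = q" using PQ_inv by (simp add: ker_group_def)
  qed (use into onto in blast)+
  ultimately show ?thesis by (simp add: iso_def)
qed

lemma ker_group_iso_conj_iff: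
  assumes l0: "l > 0" and mat_in: "mat_in l P" "mat_in l Q" "mat_in l M" "mat_in l N"
    and QP: "mmul l Q P = zmat_one l" and PQ: "mmul l P Q = zmat_one l" and NP: "mmul l N P = mmul l P M"
  shows "ker_group l N \<cong> H \<longleftrightarrow> ker_group l M \<cong> H"
proof -
  have "mmul l M Q = mmul l Q N" by (rule mmul_conj_sym[OF mat_in(4,3) PQ QP NP])
  then have "ker_group l N \<cong> ker_group l M"
    using mact_iso_ker_group[OF l0 mat_in(2,1,4,3) PQ QP] by (auto simp: is_iso_def)
  moreover have "ker_group l M \<cong> ker_group l N"
    using mact_iso_ker_group[OF assms] by (auto simp: is_iso_def)
  ultimately show ?thesis using iso_trans by metis
qed

lemma red_conj_image:
  assumes l0: "l > 0" and mat_in: "mat_in l P" "mat_in l Q"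
    and QP: "mmul l Q P = zmat_one l" and PQ: "mmul l P Q = zmat_one l" and S: "\<And>M. M \<in> S \<Longrightarrow> mat_in l M"
  shows "red l n ` {N. mat_in l N \<and> (\<exists>M\<in>S. mmul l N P = mmul l P M)} =
    (\<lambda>X. mat_mult_mod (int l ^ n) (mat_mult_mod (int l ^ n) (red l n P) X) (red l n Q)) ` red l n ` S"
proof (rule equalityI; rule subsetI)
  fix X assume "X \<in> red l n ` {N. mat_in l N \<and> (\<exists>M\<in>S. mmul l N P = mmul l P M)}"
  then obtain N M where "X = red l n N" "mat_in l N" "M \<in> S" "mmul l N P = mmul l P M" by auto
  then show "X \<in> (\<lambda>X. mat_mult_mod (int l ^ n) (mat_mult_mod (int l ^ n) (red l n P) X) (red l n Q)) ` red l n ` S"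
    using red_conj[OF _ PQ] by auto
next
  fix X assume "X \<in> (\<lambda>X. mat_mult_mod (int l ^ n) (mat_mult_mod (int l ^ n) (red l n P) X) (red l n Q)) ` red l n ` S"
  then obtain M where M: "M \<in> S" "X = mat_mult_mod (int l ^ n) (mat_mult_mod (int l ^ n) (red l n P) (red l n M)) (red l n Q)"
    by auto
  define N where "N = mmul l (mmul l P M) Q"
  have "mat_in l N" unfolding N_def using mat_in_mmul l0 mat_in S[OF M(1)] by metis
  moreover have "mmul l N P = mmul l P M"
  proof (rule zmat_eqI_red)
    fix k
    have "mat_mult_mod (int l ^ k) (red l k Q) (red l k P) = mat_one_mod (int l ^ k)"
      using arg_cong[OF QP, of "red l k"] by (simp add: red_mmul red_zmat_one)
    then show "red l k (mmul l N P) = red l k (mmul l P M)"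
      using mat_mult_mod_one_right[OF reduced_mod_mat_mult_mod]
      by (simp add: N_def red_mmul mat_mult_mod_assoc)
  qed
  moreover have "X = red l n N" using M by (simp add: N_def red_mmul)
  ultimately show "X \<in> red l n ` {N. mat_in l N \<and> (\<exists>M\<in>S. mmul l N P = mmul l P M)}" using M(1) by blast
qed

lemma card_red_conj:
  assumes l0: "l > 0" and mat_in: "mat_in l P" "mat_in l Q"
    and QP: "mmul l Q P = zmat_one l" and PQ: "mmul l P Q = zmat_one l" and S: "\<And>M. M \<in> S \<Longrightarrow> mat_in l M"
  shows "card (red l n ` {N. mat_in l N \<and> (\<exists>M\<in>S. mmul l N P = mmul l P M)}) = card (red l n ` S)"
proof -
  let ?m = "int l ^ n" and ?r = "red l n"
  have QP_red: "mat_mult_mod ?m (?r Q) (?r P) = mat_one_mod ?m"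
    using arg_cong[OF QP, of ?r] by (simp add: red_mmul red_zmat_one)
  have "inj_on (\<lambda>X. mat_mult_mod ?m (mat_mult_mod ?m (?r P) X) (?r Q)) (?r ` S)"
  proof (rule inj_on_inverseI)
    fix X assume "X \<in> ?r ` S"
    then have "reduced_mod ?m X" using S reduced_mod_red by blast
    then show "mat_mult_mod ?m (mat_mult_mod ?m (?r Q) (mat_mult_mod ?m (mat_mult_mod ?m (?r P) X) (?r Q))) (?r P) = X"
      by (simp add: mat_mult_mod_assoc QP_red mat_mult_mod_one_left mat_mult_mod_one_right
          flip: mat_mult_mod_assoc[of ?m "?r Q" "?r P"])
  qed
  then show ?thesis by (simp add: red_conj_image[OF assms] card_image)
qed

lemma mu_conj_set:
  assumes l: "prime l" and P: "P \<in> GL2 l" and C: "\<And>M. M \<in> C \<Longrightarrow> mat_in l M"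
  shows "mu l (conj_set l P C) a b =
    lim (\<lambda>n. real (card (red l n ` {M \<in> C. ker_group l M \<cong> cyclic_prod l a (a + b)})) / real (card (red l n ` C)))"
proof -
  have l0: "l > 0" using prime_gt_0_nat[OF l] .
  obtain Q where Q: "mat_in l Q" "mmul l P Q = zmat_one l" "mmul l Q P = zmat_one l"
    using GL2_inverse[OF l P] by blast
  have "mat_in l P" using P by (simp add: GL2_def)
  let ?S = "{M \<in> C. ker_group l M \<cong> cyclic_prod l a (a + b)}"
  have conj_set: "conj_set l P C = {N. mat_in l N \<and> (\<exists>M\<in>C. mmul l N P = mmul l P M)}"
    by (simp add: conj_set_def)
  have "Mab l (conj_set l P C) a b = {N. mat_in l N \<and> (\<exists>M\<in>?S. mmul l N P = mmul l P M)}"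
    using ker_group_iso_conj_iff[OF l0 \<open>mat_in l P\<close> Q(1) C _ Q(3) Q(2)]
    unfolding Mab_def conj_set cyclic_prod_def[symmetric] by blast
  then have "card (red l n ` Mab l (conj_set l P C) a b) = card (red l n ` ?S)" for n
    using card_red_conj[OF l0 \<open>mat_in l P\<close> Q(1) Q(3) Q(2), of ?S] C by auto
  moreover have "card (red l n ` conj_set l P C) = card (red l n ` C)" for n
    unfolding conj_set by (rule card_red_conj[OF l0 \<open>mat_in l P\<close> Q(1) Q(3) Q(2) C])
  ultimately show ?thesis unfolding mu_def haar_def by simp
qed

definition one_mod :: "nat \<Rightarrow> nat \<Rightarrow> int \<Rightarrow> bool" where
  "one_mod l k X \<longleftrightarrow> (X - 1) mod int l ^ k = 0"

definition exact_one_mod :: "nat \<Rightarrow> nat \<Rightarrow> int \<Rightarrow> bool" where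
  "exact_one_mod l i X \<longleftrightarrow> one_mod l i X \<and> \<not> one_mod l (Suc i) X"

text \<open>\<open>zl_exact_one_mod l i x\<close> says that \<open>x - 1\<close> has \<open>l\<close>-adic valuation exactly \<open>i\<close>.\<close>

definition zl_exact_one_mod :: "nat \<Rightarrow> nat \<Rightarrow> zl \<Rightarrow> bool" where
  "zl_exact_one_mod l i x \<longleftrightarrow> one_mod l i (x i) \<and> \<not> one_mod l (Suc i) (x (Suc i))"

lemma one_mod_0 [simp]: "one_mod l 0 X"
  by (simp add: one_mod_def)

lemma one_mod_mono: "one_mod l k X \<Longrightarrow> k' \<le> k \<Longrightarrow> one_mod l k' X"
  unfolding one_mod_def by (metis dvd_eq_mod_eq_0 dvd_trans le_imp_power_dvd)

lemma one_mod_Zl_level: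
  assumes "x \<in> Zl l" "l > 0" "k \<le> j"
  shows "one_mod l k (x k) \<longleftrightarrow> one_mod l k (x j)"
proof -
  have "(x j - 1) mod int l ^ k = (x j mod int l ^ k - 1) mod int l ^ k" by (simp add: mod_diff_left_eq)
  then show ?thesis using Zl_mod_power[OF assms(1,3,2)] by (simp add: one_mod_def)
qed

lemma zl_exact_one_mod_iff:
  assumes "x \<in> Zl l" "l > 0" "Suc i \<le> j"
  shows "zl_exact_one_mod l i x \<longleftrightarrow> exact_one_mod l i (x j)"
  using one_mod_Zl_level[OF assms(1,2), of i j] one_mod_Zl_level[OF assms(1,2), of "Suc i" j] assms(3)
  by (simp add: zl_exact_one_mod_def exact_one_mod_def)

lemma exact_one_mod_unique: "exact_one_mod l i X \<Longrightarrow> exact_one_mod l i' X \<Longrightarrow> i = i'"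
  unfolding exact_one_mod_def by (metis one_mod_mono not_less_eq_eq nle_le)

lemma zl_exact_one_mod_unique:
  assumes "zl_exact_one_mod l i x" "zl_exact_one_mod l i' x" "x \<in> Zl l" "l > 0"
  shows "i = i'"
  using assms zl_exact_one_mod_iff[OF assms(3,4), of _ "Suc (max i i')"] exact_one_mod_unique
  by (metis le_SucI max.cobounded1 max.cobounded2 not_less_eq_eq)

lemma one_mod_if_not_zl_exact_one_mod:
  assumes "\<nexists>i. zl_exact_one_mod l i x"
  shows "one_mod l k (x k)"
proof (induction k)
  case (Suc k)
  then show ?case using assms by (auto simp: zl_exact_one_mod_def)
qed simp

lemma mult_mod_prime_power_eq_0_iff:
  assumes l: "prime l" and w: "int l ^ i dvd w" "\<not> int l ^ Suc i dvd w" and "i < j"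
  shows "(w * U) mod int l ^ j = 0 \<longleftrightarrow> int l ^ (j - i) dvd U"
proof -
  obtain w' where w': "w = int l ^ i * w'" using w(1) by blast
  have "\<not> int l dvd w'" using w(2) w' by auto
  have "int l ^ j = int l ^ i * int l ^ (j - i)" using \<open>i < j\<close> by (simp add: power_add[symmetric])
  then have "(w * U) mod int l ^ j = 0 \<longleftrightarrow> int l ^ i * int l ^ (j - i) dvd int l ^ i * (w' * U)"
    by (simp add: w' dvd_eq_mod_eq_0[symmetric] ac_simps)
  also have "\<dots> \<longleftrightarrow> int l ^ (j - i) dvd w' * U" using l by simp
  also have "\<dots> \<longleftrightarrow> int l ^ (j - i) dvd U"
    using coprime_prime_power_if_not_dvd[OF l \<open>\<not> int l dvd w'\<close>, of "j - i"]
    by (simp add: coprime_commute coprime_dvd_mult_right_iff)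
  finally show ?thesis .
qed

lemma zl_exact_one_mod_mult_mod_eq_0_iff:
  assumes "prime l" "zl_exact_one_mod l i x" "x \<in> Zl l" "i < j"
  shows "((x j - 1) * U) mod int l ^ j = 0 \<longleftrightarrow> int l ^ (j - i) dvd U"
proof (rule mult_mod_prime_power_eq_0_iff[OF assms(1) _ _ assms(4)])
  have "exact_one_mod l i (x j)" using zl_exact_one_mod_iff assms prime_gt_0_nat Suc_leI by blast
  then show "int l ^ i dvd x j - 1" "\<not> int l ^ Suc i dvd x j - 1"
    by (simp_all add: exact_one_mod_def one_mod_def dvd_eq_mod_eq_0)
qed

lemma ker_group_diag_iso_iff:
  assumes l: "prime l" and x: "x \<in> Zl l" and y: "y \<in> Zl l"
  shows "ker_group l (x, zzero, zzero, y) \<cong> cyclic_prod l a (a + b) \<longleftrightarrow>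
     (zl_exact_one_mod l a x \<and> zl_exact_one_mod l (a + b) y) \<or>
     (zl_exact_one_mod l (a + b) x \<and> zl_exact_one_mod l a y)"
proof -
  have l0: "l > 0" and l1: "l > 1" using prime_gt_1_nat[OF l] by auto
  have M: "mat_in l (x, zzero, zzero, y)" using x y zzero_in_Zl[OF l0] by (simp add: mat_in_def)
  show ?thesis
  proof (cases "(\<exists>i. zl_exact_one_mod l i x) \<and> (\<exists>i. zl_exact_one_mod l i y)")
    case True
    then obtain i1 i2 where i1: "zl_exact_one_mod l i1 x" and i2: "zl_exact_one_mod l i2 y" by blast
    have "carrier (ker_group l (x, zzero, zzero, y)) = QZ_tors l i1 \<times> QZ_tors l i2"
      using zl_exact_one_mod_mult_mod_eq_0_iff[OF l i1 x] zl_exact_one_mod_mult_mod_eq_0_iff[OF l i2 y]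
      by (intro ker_group_carrier_eq_QZ_tors[OF refl M l0, of i1 "Suc (max i1 i2)" i2])
        (auto simp: zzero_def)
    then have "ker_group l (x, zzero, zzero, y) \<cong> cyclic_prod l a (a + b) \<longleftrightarrow>
        (i1 = a \<and> i2 = a + b) \<or> (i1 = a + b \<and> i2 = a)"
      by (rule ker_group_iso_cyclic_prod_iff[OF l1])
    also have "\<dots> \<longleftrightarrow> (zl_exact_one_mod l a x \<and> zl_exact_one_mod l (a + b) y) \<or>
        (zl_exact_one_mod l (a + b) x \<and> zl_exact_one_mod l a y)"
      using zl_exact_one_mod_unique[OF i1 _ x l0] zl_exact_one_mod_unique[OF i2 _ y l0] i1 i2 by blast
    finally show ?thesis .
  next
    case False
    then have "(\<forall>j. (x j - 1) mod int l ^ j = 0 \<and> zzero j = 0) \<or> (\<forall>j. zzero j = 0 \<and> (y j - 1) mod int l ^ j = 0)"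
      using one_mod_if_not_zl_exact_one_mod by (auto simp: one_mod_def zzero_def)
    then show ?thesis
      using ker_group_not_iso_cyclic_prod_if_fixes_axis[OF refl M l1] False by blast
  qed
qed

section \<open>Multiplication in the unramified quadratic order\<close>

definition irreducible_mod :: "nat \<Rightarrow> int \<Rightarrow> int \<Rightarrow> bool" where
  "irreducible_mod l T N \<longleftrightarrow> (\<forall>z::int. (z^2 - T * z + N) mod int l \<noteq> 0)"

lemma irreducible_mod_cong:
  assumes "T mod int l = T' mod int l" "N mod int l = N' mod int l" "irreducible_mod l T N"
  shows "irreducible_mod l T' N'"
proof -
  have "(z^2 - T' * z + N') mod int l = (z^2 - T * z + N) mod int l" for z
    using assms(1,2) by (metis mod_add_cong mod_diff_cong mod_mult_cong)
  then show ?thesis using assms(3) by (simp add: irreducible_mod_def)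
qed

text \<open>\<open>X^2 + T X Y + N Y^2\<close> is the norm of \<open>X + Y \<alpha>\<close>, where \<open>\<alpha>^2 = T \<alpha> - N\<close>; it is anisotropic
  modulo \<open>l\<close> because a zero \<open>(X, Y)\<close> with \<open>Y\<close> invertible yields the root \<open>-X/Y\<close> of \<open>z^2 - T z + N\<close>.\<close>

lemma norm_not_dvd_if_irreducible_mod:
  assumes l: "prime l" and irr: "irreducible_mod l T N" and "\<not> (int l dvd X \<and> int l dvd Y)"
  shows "\<not> int l dvd (X^2 + T * X * Y + N * Y^2)"
proof
  have prime: "prime (int l)" using l by simp
  assume norm: "int l dvd (X^2 + T * X * Y + N * Y^2)"
  show False
  proof (cases "int l dvd Y")
    case True
    then have "int l dvd T * X * Y + N * Y^2" by (simp add: power2_eq_square)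
    then have "int l dvd X^2" using norm by (metis add_diff_cancel_right' add.assoc dvd_diff)
    then show False using prime prime_dvd_power True assms(3) by blast
  next
    case False
    have "coprime Y (int l)" using coprime_prime_power_if_not_dvd[OF l False, of 1] by simp
    moreover have "int l > 0" using prime_gt_0_nat[OF l] by simp
    ultimately obtain Y' where "(Y * Y') mod int l = 1 mod int l"
      using inverse_mod_exists by blast
    then have inv: "int l dvd Y * Y' - 1" by (simp add: mod_eq_dvd_iff)
    define z where "z = - X * Y'"
    have "Y^2 * (z^2 - T * z + N) - (X^2 + T * X * Y + N * Y^2) =
        (Y * Y' - 1) * (X^2 * (Y * Y' + 1) + T * X * Y)"
      by (simp add: z_def power2_eq_square algebra_simps)
    then have "int l dvd Y^2 * (z^2 - T * z + N) - (X^2 + T * X * Y + N * Y^2)" using inv by simp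
    then have "int l dvd Y^2 * (z^2 - T * z + N)" using norm by (metis diff_add_cancel dvd_add)
    moreover have "\<not> int l dvd Y^2" using prime False prime_dvd_power by blast
    ultimately have "int l dvd (z^2 - T * z + N)" using prime prime_dvd_mult_iff by blast
    then show False using irr by (simp add: irreducible_mod_def dvd_eq_mod_eq_0)
  qed
qed

text \<open>The system is multiplication by \<open>X + Y \<alpha>\<close> in the basis \<open>(1, \<alpha>)\<close>; its adjugate
  gives \<open>D U\<close> and \<open>D W\<close> as combinations of the two equations, \<open>D\<close> being the norm.\<close>

lemma norm_coprime_linear_system_dvd_iff:
  assumes l: "prime l" and norm: "\<not> int l dvd (X^2 + T * X * Y + N * Y^2)"
  shows "int l ^ k dvd X * U - N * Y * W \<and> int l ^ k dvd Y * U + (X + T * Y) * W \<longleftrightarrow>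
         int l ^ k dvd U \<and> int l ^ k dvd W"
proof
  assume eqs: "int l ^ k dvd X * U - N * Y * W \<and> int l ^ k dvd Y * U + (X + T * Y) * W"
  define D where "D = X^2 + T * X * Y + N * Y^2"
  have "(X + T * Y) * (X * U - N * Y * W) + N * Y * (Y * U + (X + T * Y) * W) = D * U"
    "- Y * (X * U - N * Y * W) + X * (Y * U + (X + T * Y) * W) = D * W"
    by (simp_all add: D_def power2_eq_square algebra_simps)
  then have "int l ^ k dvd D * U" "int l ^ k dvd D * W" using eqs by (metis dvd_add dvd_mult)+
  moreover have "coprime (int l ^ k) D"
    using coprime_prime_power_if_not_dvd[OF l norm[folded D_def], of k] by (simp add: coprime_commute)
  ultimately show "int l ^ k dvd U \<and> int l ^ k dvd W" by (simp add: coprime_dvd_mult_right_iff)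
qed simp

definition nonsplit_mat :: "nat \<Rightarrow> zl \<Rightarrow> zl \<Rightarrow> zl \<Rightarrow> zl \<Rightarrow> zmat" where
  "nonsplit_mat l t n x y = (x, zneg l (zmul l n y), y, zadd l x (zmul l t y))"

lemma mat_in_nonsplit_mat:
  "l > 0 \<Longrightarrow> t \<in> Zl l \<Longrightarrow> n \<in> Zl l \<Longrightarrow> x \<in> Zl l \<Longrightarrow> y \<in> Zl l \<Longrightarrow> mat_in l (nonsplit_mat l t n x y)"
  by (simp add: nonsplit_mat_def mat_in_def zneg_in_Zl zmul_in_Zl zadd_in_Zl)

definition one_mod2 :: "nat \<Rightarrow> nat \<Rightarrow> int \<Rightarrow> int \<Rightarrow> bool" where
  "one_mod2 l k X Y \<longleftrightarrow> one_mod l k X \<and> Y mod int l ^ k = 0"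

definition exact_one_mod2 :: "nat \<Rightarrow> nat \<Rightarrow> int \<Rightarrow> int \<Rightarrow> bool" where
  "exact_one_mod2 l i X Y \<longleftrightarrow> one_mod2 l i X Y \<and> \<not> one_mod2 l (Suc i) X Y"

text \<open>\<open>zl_exact_one_mod2 l i x y\<close> says that \<open>x + y \<alpha> - 1\<close> has valuation exactly \<open>i\<close>, i.e.
  \<open>min (v (x - 1)) (v y) = i\<close>.\<close>

definition zl_exact_one_mod2 :: "nat \<Rightarrow> nat \<Rightarrow> zl \<Rightarrow> zl \<Rightarrow> bool" where
  "zl_exact_one_mod2 l i x y \<longleftrightarrow> one_mod2 l i (x i) (y i) \<and> \<not> one_mod2 l (Suc i) (x (Suc i)) (y (Suc i))"

lemma one_mod2_mono: "one_mod2 l k X Y \<Longrightarrow> k' \<le> k \<Longrightarrow> one_mod2 l k' X Y"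
  unfolding one_mod2_def using one_mod_mono by (metis dvd_eq_mod_eq_0 dvd_trans le_imp_power_dvd)

lemma one_mod2_Zl_level:
  assumes "x \<in> Zl l" "y \<in> Zl l" "l > 0" "k \<le> j"
  shows "one_mod2 l k (x k) (y k) \<longleftrightarrow> one_mod2 l k (x j) (y j)"
  using one_mod_Zl_level[OF assms(1,3,4)] Zl_mod_power[OF assms(2,4,3)] Zl_bounds[OF assms(2), of k]
  by (simp add: one_mod2_def)

lemma zl_exact_one_mod2_iff:
  assumes "x \<in> Zl l" "y \<in> Zl l" "l > 0" "Suc i \<le> j"
  shows "zl_exact_one_mod2 l i x y \<longleftrightarrow> exact_one_mod2 l i (x j) (y j)"
  using one_mod2_Zl_level[OF assms(1-3), of i j] one_mod2_Zl_level[OF assms(1-3), of "Suc i" j] assms(4)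
  by (simp add: zl_exact_one_mod2_def exact_one_mod2_def)

lemma zl_exact_one_mod2_unique:
  assumes "zl_exact_one_mod2 l i x y" "zl_exact_one_mod2 l i' x y" "x \<in> Zl l" "y \<in> Zl l" "l > 0"
  shows "i = i'"
proof -
  let ?j = "Suc (max i i')"
  have "exact_one_mod2 l i (x ?j) (y ?j)" "exact_one_mod2 l i' (x ?j) (y ?j)"
    using assms(1,2) zl_exact_one_mod2_iff[OF assms(3-5), of i ?j]
      zl_exact_one_mod2_iff[OF assms(3-5), of i' ?j] by simp_all
  then show "i = i'" unfolding exact_one_mod2_def by (metis one_mod2_mono not_less_eq_eq nle_le)
qed

lemma one_mod2_if_not_zl_exact_one_mod2:
  assumes "\<nexists>i. zl_exact_one_mod2 l i x y"
  shows "one_mod2 l k (x k) (y k)"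
proof (induction k)
  case (Suc k)
  then show ?case using assms by (auto simp: zl_exact_one_mod2_def)
qed (simp add: one_mod2_def)

lemma nonsplit_mat_fixes_iff:
  assumes l: "prime l" and t: "t \<in> Zl l" and n: "n \<in> Zl l" and x: "x \<in> Zl l" and y: "y \<in> Zl l"
    and irr: "irreducible_mod l (t 1) (n 1)" and i: "zl_exact_one_mod2 l i x y" and j: "Suc i \<le> j"
  shows "((x j - 1) * U + zneg l (zmul l n y) j * W) mod int l ^ j = 0 \<and>
      (y j * U + (zadd l x (zmul l t y) j - 1) * W) mod int l ^ j = 0 \<longleftrightarrow>
    int l ^ (j - i) dvd U \<and> int l ^ (j - i) dvd W"
proof -
  have l0: "l > 0" using prime_gt_0_nat[OF l] .
  have exact: "exact_one_mod2 l i (x j) (y j)" using zl_exact_one_mod2_iff[OF x y l0 j] i by simp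
  then obtain X Y where X: "x j - 1 = int l ^ i * X" and Y: "y j = int l ^ i * Y"
    by (auto simp: exact_one_mod2_def one_mod2_def one_mod_def mod_eq_0_iff_dvd elim!: dvdE)
  have "\<not> (int l dvd X \<and> int l dvd Y)"
  proof
    assume "int l dvd X \<and> int l dvd Y"
    then have "int l ^ Suc i dvd x j - 1" "int l ^ Suc i dvd y j" using X Y by (auto simp: mult_dvd_mono)
    then show False using exact by (simp add: exact_one_mod2_def one_mod2_def one_mod_def dvd_eq_mod_eq_0)
  qed
  moreover have "irreducible_mod l (t j) (n j)"
    using Zl_mod_power[OF t, of 1 j] Zl_mod_power[OF n, of 1 j] Zl_mod_power[OF t, of 1 1]
      Zl_mod_power[OF n, of 1 1] j l0 by (intro irreducible_mod_cong[OF _ _ irr]) simp_all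
  ultimately have norm: "\<not> int l dvd (X^2 + t j * X * Y + n j * Y^2)"
    by (rule norm_not_dvd_if_irreducible_mod[OF l, rotated])
  have pj: "int l ^ j = int l ^ i * int l ^ (j - i)" using j by (simp add: power_add[symmetric])
  have "((x j - 1) * U + zneg l (zmul l n y) j * W) mod int l ^ j =
      (int l ^ i * (X * U - n j * Y * W)) mod int l ^ j"
    by (simp add: zneg_def zmul_def mod_simps mod_mult_mod_simps X Y algebra_simps)
  moreover have "(y j * U + (zadd l x (zmul l t y) j - 1) * W) mod int l ^ j =
      (int l ^ i * (Y * U + (X + t j * Y) * W)) mod int l ^ j"
  proof -
    have "y j * U + (x j + t j * y j - 1) * W = int l ^ i * (Y * U + (X + t j * Y) * W)"
      using X Y by (simp add: algebra_simps)
    moreover have "(zadd l x (zmul l t y) j - 1) mod int l ^ j = (x j + t j * y j - 1) mod int l ^ j"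
      by (simp add: zadd_def zmul_def mod_simps)
    then have "((zadd l x (zmul l t y) j - 1) * W) mod int l ^ j = ((x j + t j * y j - 1) * W) mod int l ^ j"
      by (metis mod_mult_left_eq)
    ultimately show ?thesis by (metis mod_add_cong mod_mod_trivial)
  qed
  ultimately show ?thesis
    using norm_coprime_linear_system_dvd_iff[OF l norm, of "j - i" U W] l0
    by (simp add: pj dvd_eq_mod_eq_0[symmetric])
qed

lemma ker_group_nonsplit_iso_iff:
  assumes l: "prime l" and t: "t \<in> Zl l" and n: "n \<in> Zl l" and x: "x \<in> Zl l" and y: "y \<in> Zl l"
    and irr: "irreducible_mod l (t 1) (n 1)"
  shows "ker_group l (nonsplit_mat l t n x y) \<cong> cyclic_prod l a (a + b) \<longleftrightarrow> zl_exact_one_mod2 l a x y \<and> b = 0"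
proof -
  have l0: "l > 0" and l1: "l > 1" using prime_gt_1_nat[OF l] by auto
  let ?M = "nonsplit_mat l t n x y"
  have M: "?M = (x, zneg l (zmul l n y), y, zadd l x (zmul l t y))" "mat_in l ?M"
    using mat_in_nonsplit_mat[OF l0 t n x y] by (simp_all add: nonsplit_mat_def)
  show ?thesis
  proof (cases "\<exists>i. zl_exact_one_mod2 l i x y")
    case True
    then obtain i where i: "zl_exact_one_mod2 l i x y" by blast
    have "carrier (ker_group l ?M) = QZ_tors l i \<times> QZ_tors l i"
      using nonsplit_mat_fixes_iff[OF l t n x y irr i]
      by (intro ker_group_carrier_eq_QZ_tors[OF M l0, of i "Suc i" i]) simp_all
    then have "ker_group l ?M \<cong> cyclic_prod l a (a + b) \<longleftrightarrow> (i = a \<and> i = a + b) \<or> (i = a + b \<and> i = a)"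
      by (rule ker_group_iso_cyclic_prod_iff[OF l1])
    also have "\<dots> \<longleftrightarrow> zl_exact_one_mod2 l a x y \<and> b = 0"
      using zl_exact_one_mod2_unique[OF i _ x y l0, of a] i by auto
    finally show ?thesis .
  next
    case False
    then have "one_mod2 l j (x j) (y j)" for j by (rule one_mod2_if_not_zl_exact_one_mod2)
    then have "\<forall>j. (x j - 1) mod int l ^ j = 0 \<and> y j = 0"
      using Zl_bounds[OF y] by (simp add: one_mod2_def one_mod_def)
    then show ?thesis
      using ker_group_not_iso_cyclic_prod_if_fixes_axis[OF M l1] False by blast
  qed
qed

section \<open>Counting residues\<close>

lemma real_card_Diff_subset:
  "B \<subseteq> A \<Longrightarrow> finite A \<Longrightarrow> real (card (A - B)) = real (card A) - real (card B)"
  by (simp add: card_Diff_subset card_mono finite_subset of_nat_diff)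

lemma card_residue_preimage:
  assumes l0: "l > 0" and "k \<le> n" and S: "S \<subseteq> {0..<int l ^ k}"
  shows "card {X \<in> {0..<int l ^ n}. X mod int l ^ k \<in> S} = card S * l ^ (n - k)"
proof -
  let ?A = "{X \<in> {0..<int l ^ n}. X mod int l ^ k \<in> S}" and ?B = "S \<times> {0..<int l ^ (n - k)}"
  have pos: "int l ^ k > 0" using l0 by simp
  have n: "int l ^ n = int l ^ k * int l ^ (n - k)" using \<open>k \<le> n\<close> by (simp add: power_add[symmetric])
  have "bij_betw (\<lambda>X. (X mod int l ^ k, X div int l ^ k)) ?A ?B"
  proof (rule bij_betw_byWitness[where f' = "\<lambda>(r, q). r + int l ^ k * q"])
    show "\<forall>X\<in>?A. (\<lambda>(r, q). r + int l ^ k * q) (X mod int l ^ k, X div int l ^ k) = X"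
      by (simp add: add.commute)
    show "\<forall>p\<in>?B. (\<lambda>X. (X mod int l ^ k, X div int l ^ k)) ((\<lambda>(r, q). r + int l ^ k * q) p) = p"
      using S pos by auto
    show "(\<lambda>X. (X mod int l ^ k, X div int l ^ k)) ` ?A \<subseteq> ?B"
    proof
      fix p assume "p \<in> (\<lambda>X. (X mod int l ^ k, X div int l ^ k)) ` ?A"
      then obtain X where X: "p = (X mod int l ^ k, X div int l ^ k)" "0 \<le> X" "X < int l ^ n"
        "X mod int l ^ k \<in> S" by auto
      have "int l ^ k * (X div int l ^ k) \<le> X"
        using pos by (metis le_add_same_cancel1 mult_div_mod_eq pos_mod_sign)
      then have "X div int l ^ k < int l ^ (n - k)" using X(3) n pos by (metis le_less_trans mult_less_cancel_left_pos)
      then show "p \<in> ?B" using X pos by (simp add: pos_imp_zdiv_nonneg_iff)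
    qed
    show "(\<lambda>(r, q). r + int l ^ k * q) ` ?B \<subseteq> ?A"
    proof
      fix X assume "X \<in> (\<lambda>(r, q). r + int l ^ k * q) ` ?B"
      then obtain r q where X: "X = r + int l ^ k * q" "r \<in> S" "0 \<le> q" "q < int l ^ (n - k)" by auto
      have r: "0 \<le> r" "r < int l ^ k" using S X(2) by auto
      have "int l ^ k * (q + 1) \<le> int l ^ k * int l ^ (n - k)" using X(4) pos by simp
      then show "X \<in> ?A" using X r n pos by (simp add: algebra_simps)
    qed
  qed
  then have "card ?A = card ?B" by (rule bij_betw_same_card)
  also have "\<dots> = card S * l ^ (n - k)" by (simp add: card_cartesian_product nat_power_eq)
  finally show ?thesis .
qed

lemma card_residue_filter:
  assumes "l > 0" "k \<le> n" "S \<subseteq> {0..<int l ^ k}" "\<And>X. P X \<longleftrightarrow> X mod int l ^ k \<in> S"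
  shows "card {X \<in> {0..<int l ^ n}. P X} = card S * l ^ (n - k)"
  using card_residue_preimage[OF assms(1-3)] assms(4) by simp

definition units_mod :: "nat \<Rightarrow> nat \<Rightarrow> int set" where
  "units_mod l n = {X \<in> {0..<int l ^ n}. \<not> int l dvd X}"

definition units_exact_one_mod :: "nat \<Rightarrow> nat \<Rightarrow> nat \<Rightarrow> int set" where
  "units_exact_one_mod l n i = {X \<in> units_mod l n. exact_one_mod l i X}"

lemma finite_units_exact_one_mod: "finite (units_exact_one_mod l n i)"
  by (rule finite_subset[of _ "{0..<int l ^ n}"]) (auto simp: units_exact_one_mod_def units_mod_def)

lemma units_exact_one_mod_disjoint: "i \<noteq> i' \<Longrightarrow> units_exact_one_mod l n i \<inter> units_exact_one_mod l n i' = {}"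
  using exact_one_mod_unique by (auto simp: units_exact_one_mod_def)

lemma card_units_mod:
  assumes "l > 1" "n \<ge> 1"
  shows "card (units_mod l n) = (l - 1) * l ^ (n - 1)"
proof -
  have "\<not> int l dvd X \<longleftrightarrow> X mod int l ^ 1 \<in> {1..<int l}" for X
  proof -
    have "X mod int l \<in> {0..<int l}" using assms by simp
    then show ?thesis by (auto simp: dvd_eq_mod_eq_0)
  qed
  then have "card (units_mod l n) = card {1..<int l} * l ^ (n - 1)"
    unfolding units_mod_def by (rule card_residue_filter[rotated 3]) (use assms in auto)
  moreover have "nat (int l - 1) = l - 1" by arith
  ultimately show ?thesis by simp
qed

lemma one_mod_iff_mod_eq_1: "k \<ge> 1 \<Longrightarrow> l > 1 \<Longrightarrow> one_mod l k X \<longleftrightarrow> X mod int l ^ k \<in> {1}"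
  by (simp add: one_mod_def mod_eq_dvd_iff[symmetric] dvd_eq_mod_eq_0[symmetric] one_less_power)

lemma not_dvd_if_one_mod: "one_mod l k X \<Longrightarrow> k \<ge> 1 \<Longrightarrow> l > 1 \<Longrightarrow> \<not> int l dvd X"
  using one_mod_mono[of l k X 1] one_mod_iff_mod_eq_1[of 1 l X] by (auto simp: dvd_eq_mod_eq_0)

lemma card_one_mod:
  assumes "l > 1" "1 \<le> k" "k \<le> n"
  shows "card {X \<in> {0..<int l ^ n}. one_mod l k X} = l ^ (n - k)"
  using card_residue_filter[OF _ assms(3) _ one_mod_iff_mod_eq_1[OF assms(2,1)]] assms
  by (simp add: one_less_power)

lemma card_units_exact_one_mod_0:
  assumes "l > 1" "n \<ge> 1"
  shows "card (units_exact_one_mod l n 0) = (l - 2) * l ^ (n - 1)"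
proof -
  have "\<not> int l dvd X \<and> exact_one_mod l 0 X \<longleftrightarrow> X mod int l ^ 1 \<in> {2..<int l}" for X
  proof -
    have "0 \<le> X mod int l" "X mod int l < int l" using assms by simp_all
    then have "X mod int l \<in> {2..<int l} \<longleftrightarrow> X mod int l \<noteq> 0 \<and> X mod int l \<noteq> 1" by auto
    then show ?thesis
      using one_mod_iff_mod_eq_1[of 1 l X] assms by (auto simp: exact_one_mod_def dvd_eq_mod_eq_0)
  qed
  then have "card (units_exact_one_mod l n 0) = card {2..<int l} * l ^ (n - 1)"
    unfolding units_exact_one_mod_def units_mod_def using assms
    by (simp only: mem_Collect_eq conj_assoc) (rule card_residue_filter, auto)
  moreover have "nat (int l - 2) = l - 2" by arith
  ultimately show ?thesis by simp
qed

lemma card_units_exact_one_mod: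
  assumes "l > 1" "1 \<le> i" "Suc i \<le> n"
  shows "real (card (units_exact_one_mod l n i)) = real l ^ (n - i) - real l ^ (n - Suc i)"
proof -
  let ?A = "\<lambda>k. {X \<in> {0..<int l ^ n}. one_mod l k X}"
  have "units_exact_one_mod l n i = ?A i - ?A (Suc i)"
    using not_dvd_if_one_mod[OF _ assms(2,1)]
    by (auto simp: units_exact_one_mod_def units_mod_def exact_one_mod_def)
  moreover have "?A (Suc i) \<subseteq> ?A i" using one_mod_mono[of l "Suc i" _ i] by auto
  moreover have "finite (?A i)" by (rule finite_subset[of _ "{0..<int l ^ n}"]) auto
  ultimately have "real (card (units_exact_one_mod l n i)) = real (card (?A i)) - real (card (?A (Suc i)))"
    by (simp add: real_card_Diff_subset)
  then show ?thesis
    using card_one_mod[OF assms(1,2)] card_one_mod[OF assms(1) _ assms(3)] assms(3) by simp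
qed

definition unit_density :: "nat \<Rightarrow> nat \<Rightarrow> nat \<Rightarrow> real" where
  "unit_density l n i = real (card (units_exact_one_mod l n i)) / real (card (units_mod l n))"

lemma unit_density_eq:
  assumes l: "l > 1" and i: "Suc i \<le> n"
  shows "unit_density l n i = (if i = 0 then (real l - 2) / (real l - 1) else 1 / real l ^ i)"
proof -
  have units: "real (card (units_mod l n)) = (real l - 1) * real l ^ (n - 1)"
    using card_units_mod[OF l, of n] i l by (simp add: of_nat_diff)
  show ?thesis
  proof (cases "i = 0")
    case True
    have "real (card (units_exact_one_mod l n 0)) = (real l - 2) * real l ^ (n - 1)"
      using card_units_exact_one_mod_0[OF l, of n] i l by (cases "l = 2") (simp_all add: of_nat_diff)
    then show ?thesis using True units l by (simp add: unit_density_def)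
  next
    case False
    obtain m where m: "n = i + 1 + m" using i by (metis add.commute add_Suc_right le_Suc_ex plus_1_eq_Suc)
    have "real (card (units_exact_one_mod l n i)) = (real l - 1) * real l ^ m"
      using card_units_exact_one_mod[OF l _ i] False m by (simp add: algebra_simps)
    moreover have "real (card (units_mod l n)) = (real l - 1) * (real l ^ i * real l ^ m)"
      using units m by (simp add: power_add)
    ultimately show ?thesis using False l by (simp add: unit_density_def)
  qed
qed

text \<open>The two orders of the valuations \<open>{a, a + b}\<close> give disjoint sets unless \<open>b = 0\<close>.\<close>

lemma split_density:
  assumes "a + b + 1 \<le> n"
  shows "real (card {p \<in> units_mod l n \<times> units_mod l n.
      (exact_one_mod l a (fst p) \<and> exact_one_mod l (a + b) (snd p)) \<or>
      (exact_one_mod l (a + b) (fst p) \<and> exact_one_mod l a (snd p))})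
      / real (card (units_mod l n \<times> units_mod l n)) =
    (if b = 0 then unit_density l n a ^ 2 else 2 * unit_density l n a * unit_density l n (a + b))"
proof -
  let ?T = "units_exact_one_mod l n"
  have "{p \<in> units_mod l n \<times> units_mod l n.
      (exact_one_mod l a (fst p) \<and> exact_one_mod l (a + b) (snd p)) \<or>
      (exact_one_mod l (a + b) (fst p) \<and> exact_one_mod l a (snd p))} =
      ?T a \<times> ?T (a + b) \<union> ?T (a + b) \<times> ?T a"
    by (auto simp: units_exact_one_mod_def)
  moreover have "real (card (?T a \<times> ?T (a + b) \<union> ?T (a + b) \<times> ?T a)) =
      (if b = 0 then real (card (?T a)) ^ 2 else 2 * real (card (?T a)) * real (card (?T (a + b))))"
  proof (cases "b = 0")
    case False
    then have "(?T a \<times> ?T (a + b)) \<inter> (?T (a + b) \<times> ?T a) = {}"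
      using units_exact_one_mod_disjoint[of a "a + b" l n] by auto
    then show ?thesis
      using False finite_units_exact_one_mod by (simp add: card_Un_disjoint card_cartesian_product)
  qed (simp add: card_cartesian_product power2_eq_square)
  ultimately show ?thesis
    by (simp add: unit_density_def card_cartesian_product power2_eq_square field_simps)
qed

definition nonsplit_units_mod :: "nat \<Rightarrow> nat \<Rightarrow> (int \<times> int) set" where
  "nonsplit_units_mod l n = {p \<in> {0..<int l ^ n} \<times> {0..<int l ^ n}. \<not> (int l dvd fst p \<and> int l dvd snd p)}"

definition one_mod2_pairs :: "nat \<Rightarrow> nat \<Rightarrow> nat \<Rightarrow> (int \<times> int) set" where
  "one_mod2_pairs l n k = {p \<in> {0..<int l ^ n} \<times> {0..<int l ^ n}. one_mod2 l k (fst p) (snd p)}"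

lemma card_one_mod2_pairs:
  assumes "l > 1" "1 \<le> k" "k \<le> n"
  shows "card (one_mod2_pairs l n k) = l ^ (n - k) * l ^ (n - k)"
proof -
  have "one_mod2_pairs l n k = {X \<in> {0..<int l ^ n}. one_mod l k X} \<times> {Y \<in> {0..<int l ^ n}. Y mod int l ^ k \<in> {0}}"
    by (auto simp: one_mod2_pairs_def one_mod2_def)
  moreover have "card {Y \<in> {0..<int l ^ n}. Y mod int l ^ k \<in> {0}} = l ^ (n - k)"
    using card_residue_preimage[of l k n "{0}"] assms by simp
  ultimately show ?thesis using card_one_mod[OF assms] by (simp add: card_cartesian_product)
qed

lemma one_mod2_pairs_subset: "l > 1 \<Longrightarrow> 1 \<le> k \<Longrightarrow> one_mod2_pairs l n k \<subseteq> nonsplit_units_mod l n"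
  using not_dvd_if_one_mod by (auto simp: one_mod2_pairs_def nonsplit_units_mod_def one_mod2_def)

lemma one_mod2_pairs_antimono: "k' \<le> k \<Longrightarrow> one_mod2_pairs l n k \<subseteq> one_mod2_pairs l n k'"
  using one_mod2_mono by (auto simp: one_mod2_pairs_def)

lemma finite_one_mod2_pairs: "finite (one_mod2_pairs l n k)"
  by (rule finite_subset[of _ "{0..<int l ^ n} \<times> {0..<int l ^ n}"]) (auto simp: one_mod2_pairs_def)

lemma finite_nonsplit_units_mod: "finite (nonsplit_units_mod l n)"
  by (rule finite_subset[of _ "{0..<int l ^ n} \<times> {0..<int l ^ n}"]) (auto simp: nonsplit_units_mod_def)

lemma card_nonsplit_units_mod:
  assumes "l > 1" "n \<ge> 1"
  shows "real (card (nonsplit_units_mod l n)) = real l ^ n * real l ^ n - real l ^ (n - 1) * real l ^ (n - 1)"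
proof -
  let ?W = "{0..<int l ^ n} \<times> {0..<int l ^ n}" and ?B = "{X \<in> {0..<int l ^ n}. X mod int l ^ 1 \<in> {0}}"
  have "nonsplit_units_mod l n = ?W - ?B \<times> ?B" by (auto simp: nonsplit_units_mod_def dvd_eq_mod_eq_0)
  moreover have "?B \<times> ?B \<subseteq> ?W" by auto
  moreover have "card ?B = l ^ (n - 1)" using card_residue_preimage[of l 1 n "{0}"] assms by simp
  ultimately have "real (card (nonsplit_units_mod l n)) = real (card ?W) - real (card (?B \<times> ?B))"
    by (simp add: real_card_Diff_subset)
  then show ?thesis using \<open>card ?B = l ^ (n - 1)\<close> by (simp add: card_cartesian_product nat_power_eq)
qed

text \<open>For \<open>a > 0\<close> the admissible pairs are \<open>one_mod2_pairs a - one_mod2_pairs (a + 1)\<close>; for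
  \<open>a = 0\<close> they are the complement of \<open>one_mod2_pairs 1\<close> in the units.\<close>

lemma nonsplit_density:
  assumes l: "l > 1" and n: "a + 1 \<le> n"
  shows "real (card {p \<in> nonsplit_units_mod l n. exact_one_mod2 l a (fst p) (snd p)}) /
      real (card (nonsplit_units_mod l n)) =
    (if a = 0 then (real l ^ 2 - 2) / (real l ^ 2 - 1) else 1 / real l ^ (2 * a))"
proof -
  define q where "q = real l"
  define m where "m = n - Suc a"
  have m: "n = Suc (a + m)" using n by (simp add: m_def)
  define A where "A = (q ^ a * q ^ m) ^ 2"
  have "A > 0" using l by (simp add: A_def q_def)
  have "q * q > 1 * 1" using l by (intro mult_strict_mono) (simp_all add: q_def)
  have units: "real (card (nonsplit_units_mod l n)) = A * (q ^ 2 - 1)"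
    using card_nonsplit_units_mod[OF l, of n] m
    by (simp add: A_def q_def power_add power2_eq_square algebra_simps)
  show ?thesis
  proof (cases "a = 0")
    case True
    have "{p \<in> nonsplit_units_mod l n. exact_one_mod2 l a (fst p) (snd p)} =
        nonsplit_units_mod l n - one_mod2_pairs l n 1"
      using True by (auto simp: exact_one_mod2_def one_mod2_def nonsplit_units_mod_def one_mod2_pairs_def)
    moreover have "real (card (nonsplit_units_mod l n - one_mod2_pairs l n 1)) =
        real (card (nonsplit_units_mod l n)) - real (card (one_mod2_pairs l n 1))"
      using one_mod2_pairs_subset[OF l order_refl] finite_nonsplit_units_mod
      by (rule real_card_Diff_subset)
    moreover have "real (card (one_mod2_pairs l n 1)) = A"
      using card_one_mod2_pairs[OF l order_refl, of n] True m by (simp add: A_def q_def power2_eq_square)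
    ultimately have "real (card {p \<in> nonsplit_units_mod l n. exact_one_mod2 l a (fst p) (snd p)}) =
        A * (q ^ 2 - 2)"
      using units by (simp add: algebra_simps)
    then show ?thesis using units \<open>A > 0\<close> \<open>q * q > 1 * 1\<close> True by (simp add: q_def power2_eq_square)
  next
    case False
    have "{p \<in> nonsplit_units_mod l n. exact_one_mod2 l a (fst p) (snd p)} =
        one_mod2_pairs l n a - one_mod2_pairs l n (Suc a)"
      using one_mod2_pairs_subset[OF l, of a n] False
      by (auto simp: exact_one_mod2_def one_mod2_pairs_def nonsplit_units_mod_def)
    moreover have "real (card (one_mod2_pairs l n a - one_mod2_pairs l n (Suc a))) =
        real (card (one_mod2_pairs l n a)) - real (card (one_mod2_pairs l n (Suc a)))"
      using one_mod2_pairs_antimono[of a "Suc a" l n] finite_one_mod2_pairs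
      by (rule real_card_Diff_subset) simp
    ultimately have "real (card {p \<in> nonsplit_units_mod l n. exact_one_mod2 l a (fst p) (snd p)}) =
        (q ^ m) ^ 2 * (q ^ 2 - 1)"
      using card_one_mod2_pairs[OF l, of a n] card_one_mod2_pairs[OF l, of "Suc a" n] False m
      by (simp add: q_def power2_eq_square algebra_simps)
    moreover have "(q ^ m) ^ 2 * (q ^ 2 - 1) / (A * (q ^ 2 - 1)) = 1 / q ^ (2 * a)"
      using \<open>q * q > 1 * 1\<close> l by (simp add: A_def q_def power_mult power2_eq_square field_simps)
    ultimately show ?thesis using units False by (simp add: q_def)
  qed
qed

lemma red_split_std_filter:
  assumes l: "prime l" and j: "j \<ge> 1"
    and P: "\<And>x y. x \<in> Zl l \<Longrightarrow> y \<in> Zl l \<Longrightarrow> P (x, zzero, zzero, y) \<longleftrightarrow> Q (x j) (y j)"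
  shows "red l j ` {M \<in> split_std l. P M} =
    (\<lambda>(X, Y). (X, 0, 0, Y)) ` {p \<in> units_mod l j \<times> units_mod l j. Q (fst p) (snd p)}"
proof (rule equalityI; rule subsetI)
  fix Z :: imat assume "Z \<in> red l j ` {M \<in> split_std l. P M}"
  then obtain x y where xy: "zunit l x" "zunit l y" "P (x, zzero, zzero, y)" "Z = red l j (x, zzero, zzero, y)"
    by (auto simp: split_std_def)
  then have "x \<in> Zl l" "y \<in> Zl l" by (simp_all add: zunit_def)
  then have "(x j, y j) \<in> {p \<in> units_mod l j \<times> units_mod l j. Q (fst p) (snd p)}"
    using zunit_eval_not_dvd[OF l _ j] xy P Zl_bounds by (simp add: units_mod_def)
  then show "Z \<in> (\<lambda>(X, Y). (X, 0, 0, Y)) ` {p \<in> units_mod l j \<times> units_mod l j. Q (fst p) (snd p)}"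
    using xy(4) by (force simp: red_def zzero_def)
next
  fix Z :: imat assume "Z \<in> (\<lambda>(X, Y). (X, 0, 0, Y)) ` {p \<in> units_mod l j \<times> units_mod l j. Q (fst p) (snd p)}"
  then obtain X Y where XY: "X \<in> units_mod l j" "Y \<in> units_mod l j" "Q X Y" "Z = (X, 0, 0, Y)" by auto
  let ?x = "zl_of_int l X" and ?y = "zl_of_int l Y"
  have "zunit l ?x" "zunit l ?y" using zunit_zl_of_int[OF l] XY by (auto simp: units_mod_def)
  moreover have "?x j = X" "?y j = Y" using zl_of_int_eval XY by (auto simp: units_mod_def)
  moreover have "?x \<in> Zl l" "?y \<in> Zl l" using zl_of_int_in_Zl prime_gt_0_nat[OF l] by auto
  ultimately have "(?x, zzero, zzero, ?y) \<in> {M \<in> split_std l. P M}" "Z = red l j (?x, zzero, zzero, ?y)"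
    using P XY by (auto simp: split_std_def red_def zzero_def)
  then show "Z \<in> red l j ` {M \<in> split_std l. P M}" by blast
qed

lemma mdet_nonsplit_mat:
  "mdet l (nonsplit_mat l t n x y) k mod int l ^ k = (x k ^ 2 + t k * x k * y k + n k * y k ^ 2) mod int l ^ k"
proof -
  have "mdet l (nonsplit_mat l t n x y) k mod int l ^ k = (x k * (x k + t k * y k) - (- (n k * y k)) * y k) mod int l ^ k"
    by (simp add: mdet_def nonsplit_mat_def zsub_def zmul_def zadd_def zneg_def mod_simps mod_mult_mod_simps)
  then show ?thesis by (simp add: power2_eq_square algebra_simps)
qed

lemma nonsplit_mat_in_GL2_iff:
  assumes l: "prime l" and "t \<in> Zl l" "n \<in> Zl l" "x \<in> Zl l" "y \<in> Zl l" and irr: "irreducible_mod l (t 1) (n 1)"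
  shows "nonsplit_mat l t n x y \<in> GL2 l \<longleftrightarrow> \<not> (int l dvd x 1 \<and> int l dvd y 1)"
proof -
  have l0: "l > 0" using prime_gt_0_nat[OF l] .
  have "mdet l (nonsplit_mat l t n x y) \<in> Zl l"
    using assms l0 by (simp add: nonsplit_mat_def mdet_def zsub_in_Zl zmul_in_Zl zneg_in_Zl zadd_in_Zl)
  then have "nonsplit_mat l t n x y \<in> GL2 l \<longleftrightarrow> \<not> int l dvd mdet l (nonsplit_mat l t n x y) 1"
    using mat_in_nonsplit_mat[OF l0 assms(2-5)] zunit_iff_not_dvd[OF l] by (simp add: GL2_def)
  also have "\<dots> \<longleftrightarrow> \<not> int l dvd (x 1 ^ 2 + t 1 * x 1 * y 1 + n 1 * y 1 ^ 2)"
    using mdet_nonsplit_mat[of l t n x y 1] by (simp add: dvd_eq_mod_eq_0)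
  also have "\<dots> \<longleftrightarrow> \<not> (int l dvd x 1 \<and> int l dvd y 1)"
    using norm_not_dvd_if_irreducible_mod[OF l irr] by (auto simp: power2_eq_square)
  finally show ?thesis .
qed

definition nonsplit_mat_mod :: "nat \<Rightarrow> zl \<Rightarrow> zl \<Rightarrow> nat \<Rightarrow> int \<times> int \<Rightarrow> imat" where
  "nonsplit_mat_mod l t n j p = (fst p, (- (n j * snd p)) mod int l ^ j, snd p, (fst p + t j * snd p) mod int l ^ j)"

lemma red_nonsplit_std_filter:
  assumes l: "prime l" and j: "j \<ge> 1" and t: "t \<in> Zl l" and n: "n \<in> Zl l"
    and irr: "irreducible_mod l (t 1) (n 1)"
    and P: "\<And>x y. x \<in> Zl l \<Longrightarrow> y \<in> Zl l \<Longrightarrow> P (nonsplit_mat l t n x y) \<longleftrightarrow> Q (x j) (y j)"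
  shows "red l j ` {M \<in> nonsplit_std l t n. P M} =
    nonsplit_mat_mod l t n j ` {p \<in> nonsplit_units_mod l j. Q (fst p) (snd p)}"
proof -
  have l0: "l > 0" using prime_gt_0_nat[OF l] .
  have red: "red l j (nonsplit_mat l t n x y) = nonsplit_mat_mod l t n j (x j, y j)" for x y
    by (simp add: red_def nonsplit_mat_def nonsplit_mat_mod_def zneg_def zmul_def zadd_def mod_simps)
  have std: "nonsplit_std l t n = {nonsplit_mat l t n x y | x y. x \<in> Zl l \<and> y \<in> Zl l} \<inter> GL2 l"
    by (simp add: nonsplit_std_def nonsplit_mat_def)
  have GL2: "nonsplit_mat l t n x y \<in> GL2 l \<longleftrightarrow> \<not> (int l dvd x j \<and> int l dvd y j)"
    if "x \<in> Zl l" "y \<in> Zl l" for x y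
    using nonsplit_mat_in_GL2_iff[OF l t n that irr] Zl_dvd_iff_dvd_first[OF _ l0 j] that by simp
  show ?thesis
  proof (rule equalityI; rule subsetI)
    fix Z assume "Z \<in> red l j ` {M \<in> nonsplit_std l t n. P M}"
    then obtain x y where xy: "x \<in> Zl l" "y \<in> Zl l" "nonsplit_mat l t n x y \<in> GL2 l"
        "P (nonsplit_mat l t n x y)" "Z = red l j (nonsplit_mat l t n x y)"
      unfolding std by blast
    then have "(x j, y j) \<in> {p \<in> nonsplit_units_mod l j. Q (fst p) (snd p)}"
      using GL2 P Zl_bounds by (simp add: nonsplit_units_mod_def)
    then show "Z \<in> nonsplit_mat_mod l t n j ` {p \<in> nonsplit_units_mod l j. Q (fst p) (snd p)}"
      using xy(5) red by auto
  next
    fix Z assume "Z \<in> nonsplit_mat_mod l t n j ` {p \<in> nonsplit_units_mod l j. Q (fst p) (snd p)}"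
    then obtain X Y where XY: "(X, Y) \<in> nonsplit_units_mod l j" "Q X Y" "Z = nonsplit_mat_mod l t n j (X, Y)"
      by auto
    let ?x = "zl_of_int l X" and ?y = "zl_of_int l Y"
    have Zl: "?x \<in> Zl l" "?y \<in> Zl l" using zl_of_int_in_Zl[OF l0] by auto
    have "?x j = X" "?y j = Y" using zl_of_int_eval XY(1) by (auto simp: nonsplit_units_mod_def)
    then have "nonsplit_mat l t n ?x ?y \<in> {M \<in> nonsplit_std l t n. P M}" "Z = red l j (nonsplit_mat l t n ?x ?y)"
      using GL2[OF Zl] P[OF Zl] XY Zl red unfolding std by (auto simp: nonsplit_units_mod_def)
    then show "Z \<in> red l j ` {M \<in> nonsplit_std l t n. P M}" by blast
  qed
qed

lemma lim_eventually_eq: "(\<And>n. n \<ge> N \<Longrightarrow> f n = (c::real)) \<Longrightarrow> lim f = c"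
  by (rule limI, rule tendsto_eventually) (auto simp: eventually_sequentially)

lemma split_density_eq:
  assumes l: "l > 1" and n: "a + b + 1 \<le> n"
  shows "(if b = 0 then unit_density l n a ^ 2 else 2 * unit_density l n a * unit_density l n (a + b)) =
    (if a = 0 \<and> b = 0 then (real l - 2)^2 / (real l - 1)^2
     else if a = 0 \<and> b > 0 then 2 * (real l - 2) / (real l - 1) / real l ^ b
     else if a > 0 \<and> b = 0 then 1 / real l ^ (2 * a)
     else 2 / real l ^ (2 * a + b))"
proof -
  have a: "unit_density l n a = (if a = 0 then (real l - 2) / (real l - 1) else 1 / real l ^ a)"
    using unit_density_eq[OF l, of a n] n by simp
  have ab: "unit_density l n (a + b) = (if a + b = 0 then (real l - 2) / (real l - 1) else 1 / real l ^ (a + b))"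
    using unit_density_eq[OF l, of "a + b" n] n by simp
  consider "a = 0" "b = 0" | "a = 0" "b > 0" | "a > 0" "b = 0" | "a > 0" "b > 0" by blast
  then show ?thesis
  proof cases
    case 1
    then show ?thesis using a by (simp add: power_divide)
  next
    case 2
    then show ?thesis using a ab by simp
  next
    case 3
    have "(1 / real l ^ a) ^ 2 = 1 / real l ^ (2 * a)" by (simp add: power_divide power_mult[symmetric] mult.commute)
    then show ?thesis using 3 a by simp
  next
    case 4
    have "2 * (1 / real l ^ a) * (1 / real l ^ (a + b)) = 2 / real l ^ (2 * a + b)" by (simp add: power_add mult_2)
    then show ?thesis using 4 a ab by simp
  qed
qed

lemma haar_split_std:
  assumes l: "prime l"
  shows "lim (\<lambda>n. real (card (red l n ` {M \<in> split_std l. ker_group l M \<cong> cyclic_prod l a (a + b)}))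
      / real (card (red l n ` split_std l))) =
    (if a = 0 \<and> b = 0 then (real l - 2)^2 / (real l - 1)^2
     else if a = 0 \<and> b > 0 then 2 * (real l - 2) / (real l - 1) / real l ^ b
     else if a > 0 \<and> b = 0 then 1 / real l ^ (2 * a)
     else 2 / real l ^ (2 * a + b))"
proof (rule lim_eventually_eq)
  fix n assume n: "a + b + 1 \<le> n"
  have l0: "l > 0" and l1: "l > 1" using prime_gt_1_nat[OF l] by auto
  let ?Q = "\<lambda>X Y. (exact_one_mod l a X \<and> exact_one_mod l (a + b) Y) \<or>
    (exact_one_mod l (a + b) X \<and> exact_one_mod l a Y)"
  let ?diag = "\<lambda>(X, Y). (X, 0::int, 0::int, Y)"
  have "inj ?diag" by (auto simp: inj_def)
  have card: "card (?diag ` A) = card A" for A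
    by (rule card_image[OF inj_on_subset[OF \<open>inj ?diag\<close> subset_UNIV]])
  have "red l n ` {M \<in> split_std l. ker_group l M \<cong> cyclic_prod l a (a + b)} =
      ?diag ` {p \<in> units_mod l n \<times> units_mod l n. ?Q (fst p) (snd p)}"
  proof (rule red_split_std_filter[OF l])
    fix x y assume xy: "x \<in> Zl l" "y \<in> Zl l"
    have "Suc a \<le> n" "Suc (a + b) \<le> n" using n by auto
    then show "ker_group l (x, zzero, zzero, y) \<cong> cyclic_prod l a (a + b) \<longleftrightarrow> ?Q (x n) (y n)"
      using ker_group_diag_iso_iff[OF l xy] zl_exact_one_mod_iff[OF xy(1) l0, of a n]
        zl_exact_one_mod_iff[OF xy(2) l0, of a n] zl_exact_one_mod_iff[OF xy(1) l0, of "a + b" n]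
        zl_exact_one_mod_iff[OF xy(2) l0, of "a + b" n] by simp
  qed (use n in simp)
  moreover have "red l n ` {M \<in> split_std l. True} = ?diag ` {p \<in> units_mod l n \<times> units_mod l n. True}"
    using n by (intro red_split_std_filter[OF l]) auto
  ultimately have "real (card (red l n ` {M \<in> split_std l. ker_group l M \<cong> cyclic_prod l a (a + b)}))
      / real (card (red l n ` split_std l)) =
    (if b = 0 then unit_density l n a ^ 2 else 2 * unit_density l n a * unit_density l n (a + b))"
    using split_density[OF n] by (simp add: card)
  also have "\<dots> = (if a = 0 \<and> b = 0 then (real l - 2)^2 / (real l - 1)^2
     else if a = 0 \<and> b > 0 then 2 * (real l - 2) / (real l - 1) / real l ^ b
     else if a > 0 \<and> b = 0 then 1 / real l ^ (2 * a)
     else 2 / real l ^ (2 * a + b))"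
    by (rule split_density_eq[OF l1 n])
  finally show "real (card (red l n ` {M \<in> split_std l. ker_group l M \<cong> cyclic_prod l a (a + b)}))
      / real (card (red l n ` split_std l)) = \<dots>" .
qed

lemma haar_nonsplit_std:
  assumes l: "prime l" and t: "t \<in> Zl l" and n: "n \<in> Zl l" and irr: "irreducible_mod l (t 1) (n 1)"
  shows "lim (\<lambda>j. real (card (red l j ` {M \<in> nonsplit_std l t n. ker_group l M \<cong> cyclic_prod l a (a + b)}))
      / real (card (red l j ` nonsplit_std l t n))) =
    (if a = 0 \<and> b = 0 then (real l ^ 2 - 2) / (real l ^ 2 - 1)
     else if a > 0 \<and> b = 0 then 1 / real l ^ (2 * a)
     else 0)"
proof (rule lim_eventually_eq)
  fix j assume j: "a + 1 \<le> j"
  have l0: "l > 0" and l1: "l > 1" using prime_gt_1_nat[OF l] by auto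
  have "inj (nonsplit_mat_mod l t n j)" by (auto simp: inj_def nonsplit_mat_mod_def prod_eq_iff)
  have card: "card (nonsplit_mat_mod l t n j ` A) = card A" for A
    by (rule card_image[OF inj_on_subset[OF \<open>inj (nonsplit_mat_mod l t n j)\<close> subset_UNIV]])
  have "red l j ` {M \<in> nonsplit_std l t n. ker_group l M \<cong> cyclic_prod l a (a + b)} =
      nonsplit_mat_mod l t n j ` {p \<in> nonsplit_units_mod l j. exact_one_mod2 l a (fst p) (snd p) \<and> b = 0}"
  proof (rule red_nonsplit_std_filter[OF l _ t n irr])
    fix x y assume xy: "x \<in> Zl l" "y \<in> Zl l"
    show "ker_group l (nonsplit_mat l t n x y) \<cong> cyclic_prod l a (a + b) \<longleftrightarrow>
        exact_one_mod2 l a (x j) (y j) \<and> b = 0"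
      using ker_group_nonsplit_iso_iff[OF l t n xy irr] zl_exact_one_mod2_iff[OF xy l0, of a j] j by simp
  qed (use j in simp)
  moreover have "red l j ` {M \<in> nonsplit_std l t n. True} = nonsplit_mat_mod l t n j ` {p \<in> nonsplit_units_mod l j. True}"
    using j by (intro red_nonsplit_std_filter[OF l _ t n irr]) auto
  ultimately show "real (card (red l j ` {M \<in> nonsplit_std l t n. ker_group l M \<cong> cyclic_prod l a (a + b)}))
      / real (card (red l j ` nonsplit_std l t n)) =
    (if a = 0 \<and> b = 0 then (real l ^ 2 - 2) / (real l ^ 2 - 1)
     else if a > 0 \<and> b = 0 then 1 / real l ^ (2 * a)
     else 0)"
    using nonsplit_density[OF l1 j] by (cases "a = 0") (simp_all add: card)
qed

theorem theorem3:
  fixes l :: nat and G :: "zmat set" and a b :: nat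
  assumes "prime l"
  shows "(split_cartan l G \<longrightarrow>
            mu l G a b =
              (if a = 0 \<and> b = 0 then (real l - 2)^2 / (real l - 1)^2
               else if a = 0 \<and> b > 0 then 2 * (real l - 2) / (real l - 1) / real l ^ b
               else if a > 0 \<and> b = 0 then 1 / real l ^ (2 * a)
               else 2 / real l ^ (2 * a + b)))
       \<and> (nonsplit_cartan l G \<longrightarrow>
            mu l G a b =
              (if a = 0 \<and> b = 0 then (real l ^ 2 - 2) / (real l ^ 2 - 1)
               else if a > 0 \<and> b = 0 then 1 / real l ^ (2 * a)
               else 0))"
proof (intro conjI impI)
  have l0: "l > 0" using prime_gt_0_nat[OF assms] .
  assume "split_cartan l G"
  then obtain P where P: "P \<in> GL2 l" "G = conj_set l P (split_std l)" by (auto simp: split_cartan_def)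
  have "mat_in l M" if "M \<in> split_std l" for M
    using that zzero_in_Zl[OF l0] by (auto simp: split_std_def mat_in_def zunit_def)
  then show "mu l G a b = (if a = 0 \<and> b = 0 then (real l - 2)^2 / (real l - 1)^2
      else if a = 0 \<and> b > 0 then 2 * (real l - 2) / (real l - 1) / real l ^ b
      else if a > 0 \<and> b = 0 then 1 / real l ^ (2 * a)
      else 2 / real l ^ (2 * a + b))"
    using mu_conj_set[OF assms P(1)] haar_split_std[OF assms] P(2) by simp
next
  assume "nonsplit_cartan l G"
  then obtain P t n where P: "P \<in> GL2 l" "t \<in> Zl l" "n \<in> Zl l" "irreducible_mod l (t 1) (n 1)"
    "G = conj_set l P (nonsplit_std l t n)"
    by (auto simp: nonsplit_cartan_def irreducible_mod_def)
  have "mat_in l M" if "M \<in> nonsplit_std l t n" for M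
    using that by (auto simp: nonsplit_std_def GL2_def)
  then show "mu l G a b = (if a = 0 \<and> b = 0 then (real l ^ 2 - 2) / (real l ^ 2 - 1)
      else if a > 0 \<and> b = 0 then 1 / real l ^ (2 * a)
      else 0)"
    using mu_conj_set[OF assms P(1)] haar_nonsplit_std[OF assms P(2-4)] P(5) by simp
qed

end
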